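(* Let $c>0$, $N,n,n_1,n_2,a_1,a_2,\varepsilon\in\mathbb{R}$, $D=\{\vec\gamma:\gamma_1^2+\gamma_2^2>0\}$, $\rho=\sqrt{\gamma_1^2+\gamma_2^2}$, $\mathbb{I}=\operatorname{diag}(2c,2c,c)$, let $\vec\mu$ be as follows: $$\mu_1=c\Big(-n\gamma_1-n_1\gamma_1^2+2n_1\gamma_2^2+n_1\gamma_3^2-3n_2\gamma_1\gamma_2+\frac{N\gamma_1}{\rho^{3}}\Big),\quad \mu_2=c\Big(-n\gamma_2+2n_2\gamma_1^2-n_2\gamma_2^2+n_2\gamma_3^2-3n_1\gamma_1\gamma_2+\frac{N\gamma_2}{\rho^{3}}\Big),$$ $$\mu_3=-c\gamma_3\Big(3n+5n_1\gamma_1+5n_2\gamma_2+\frac{N\gamma_3}{\rho}\Big),$$ and $U(\vec\gamma)=c(a_1\gamma_1+a_2\gamma_2)+\frac{\varepsilon}{\rho}-\frac12c\big(n+n_1\gamma_1+n_2\gamma_2+\frac N\rho\big)^2(2\gamma_1^2+2\gamma_2^2+\gamma_3^2)$. Let $$I_2=\vec M\cdot\vec\gamma+c\Big(n+n_1\gamma_1+n_2\gamma_2+\frac{N}{\rho}\Big)(2\gamma_1^2+2\gamma_2^2+\gamma_3^2).$$ (a) If $N\neq0$, then $I_2$ is not a constant of motion of the system $\dot{\vec M}=-\mathbb{I}^{-1}\vec M\times(\vec M+\vec\mu)+\vec\gamma\times\nabla_{\vec\gamma}U$, $\dot{\vec\gamma}=\vec\gamma\times\mathbb{I}^{-1}\vec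 M$ on $\mathbb{R}^3\times D$. (b) Let $\vec\mu'=(\mu_1,\mu_2,\mu_3')$ with $\mu_3'=-c\gamma_3\big(3n+5n_1\gamma_1+5n_2\gamma_2-N\frac{\gamma_3^2+1}{\rho^{3}}\big)$. Then $\vec\mu'=\psi\vec\gamma+\nabla_{\vec\gamma}\varphi$ with $\varphi=c\big(n+n_1\gamma_1+n_2\gamma_2+\frac N\rho\big)(2\gamma_1^2+2\gamma_2^2+\gamma_3^2)$ and $\psi=-c\big(5n+7n_1\gamma_1+7n_2\gamma_2+N\frac{2\rho^2-\gamma_3^2-1}{\rho^3}\big)$; hence $\Pi_{\vec\mu'}$ defines a Poisson bracket on $\mathbb{R}^3\times D$ and $I_2$ is a Casimir function of $\Pi_{\vec\mu'}$.
   Context: Coordinates on $\mathbb{R}^6$ are $(\vec M,\vec\gamma)=(M_1,M_2,M_3,\gamma_1,\gamma_2,\gamma_3)$. For a smooth $\vec\mu=(\mu_1,\mu_2,\mu_3)$ of $(\vec M,\vec\gamma)$, $\Pi_{\vec\mu}$ is the skew-symmetric $6\times6$ matrix $$\Pi_{\vec\mu}=\begin{bmatrix}0&-M_3-\mu_3&M_2+\mu_2&0&-\gamma_3&\gamma_2\\ M_3+\mu_3&0&-M_1-\mu_1&\gamma_3&0&-\gamma_1\\ -M_2-\mu_2&M_1+\mu_1&0&-\gamma_2&\gamma_1&0\\ 0&-\gamma_3&\gamma_2&0&0&0\\ \gamma_3&0&-\gamma_1&0&0&0\\ -\gamma_2&\gamma_1&0&0&0&0\end{bmatrix},$$ it "defines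 a Poisson bracket" if $\{f,g\}_{\vec\mu}=(\nabla f)^T\Pi_{\vec\mu}\nabla g$ satisfies the Jacobi identity, and a Casimir function is a smooth $C$ with $\Pi_{\vec\mu}\nabla C=0$. A constant of motion is a function constant along every solution. *)

theory Defs
  imports "HOL-Analysis.Analysis" "HOL-Analysis.Cross3"
begin

definition Mv :: "real^6 \<Rightarrow> real^3" where
  "Mv x = vector [x$1, x$2, x$3]"

definition gv :: "real^6 \<Rightarrow> real^3" where
  "gv x = vector [x$4, x$5, x$6]"

definition pack6 :: "real^3 \<Rightarrow> real^3 \<Rightarrow> real^6" where
  "pack6 M g = vector [M$1, M$2, M$3, g$1, g$2, g$3]"

definition Dset :: "(real^3) set" where
  "Dset = {g. (g$1)^2 + (g$2)^2 > 0}"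

definition Phase :: "(real^6) set" where
  "Phase = {x. gv x \<in> Dset}"

definition grad_r :: "(real^'n \<Rightarrow> real) \<Rightarrow> real^'n \<Rightarrow> real^'n" where
  "grad_r f x = (\<chi> i. frechet_derivative f (at x) (axis i 1))"

fun Ck_on :: "nat \<Rightarrow> (real^'n) set \<Rightarrow> (real^'n \<Rightarrow> real) \<Rightarrow> bool" where
  "Ck_on 0 S f = continuous_on S f"
| "Ck_on (Suc k) S f = (f differentiable_on S \<and>
      (\<forall>i. Ck_on k S (\<lambda>x. frechet_derivative f (at x) (axis i 1))))"

definition smooth_on :: "(real^'n) set \<Rightarrow> (real^'n \<Rightarrow> real) \<Rightarrow> bool" where
  "smooth_on S f = (\<forall>k. Ck_on k S f)"

definition Pi_mat :: "(real^6 \<Rightarrow> real^3) \<Rightarrow> real^6 \<Rightarrow> real^6^6" where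
  "Pi_mat mu x = (let M1 = x$1; M2 = x$2; M3 = x$3; g1 = x$4; g2 = x$5; g3 = x$6;
       m1 = mu x $ 1; m2 = mu x $ 2; m3 = mu x $ 3 in
     vector [
       vector [0, -M3-m3, M2+m2, 0, -g3, g2],
       vector [M3+m3, 0, -M1-m1, g3, 0, -g1],
       vector [-M2-m2, M1+m1, 0, -g2, g1, 0],
       vector [0, -g3, g2, 0, 0, 0],
       vector [g3, 0, -g1, 0, 0, 0],
       vector [-g2, g1, 0, 0, 0, 0]])"

definition pbracket :: "(real^6 \<Rightarrow> real^6^6) \<Rightarrow> (real^6 \<Rightarrow> real) \<Rightarrow> (real^6 \<Rightarrow> real) \<Rightarrow> real^6 \<Rightarrow> real" where
  "pbracket P f g x = grad_r f x \<bullet> (P x *v grad_r g x)"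

definition is_poisson_on :: "(real^6 \<Rightarrow> real^6^6) \<Rightarrow> (real^6) set \<Rightarrow> bool" where
  "is_poisson_on P S = (\<forall>f g h. smooth_on S f \<and> smooth_on S g \<and> smooth_on S h \<longrightarrow>
     (\<forall>x\<in>S. pbracket P f (pbracket P g h) x + pbracket P g (pbracket P h f) x
             + pbracket P h (pbracket P f g) x = 0))"

definition casimir_on :: "(real^6 \<Rightarrow> real^6^6) \<Rightarrow> (real^6) set \<Rightarrow> (real^6 \<Rightarrow> real) \<Rightarrow> bool" where
  "casimir_on P S C = (smooth_on S C \<and> (\<forall>x\<in>S. P x *v grad_r C x = 0))"

definition is_solution :: "(real^6 \<Rightarrow> real^6) \<Rightarrow> (real^6) set \<Rightarrow> (real \<Rightarrow> real^6) \<Rightarrow> real set \<Rightarrow> bool" where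
  "is_solution F S y J = (is_interval J \<and> open J \<and>
     (\<forall>t\<in>J. y t \<in> S \<and> (y has_vector_derivative F (y t)) (at t)))"

definition const_of_motion :: "(real^6 \<Rightarrow> real^6) \<Rightarrow> (real^6) set \<Rightarrow> (real^6 \<Rightarrow> real) \<Rightarrow> bool" where
  "const_of_motion F S I = (\<forall>y J. is_solution F S y J \<longrightarrow> (\<forall>s\<in>J. \<forall>t\<in>J. I (y s) = I (y t)))"

definition rho :: "real^3 \<Rightarrow> real" where
  "rho g = sqrt ((g$1)^2 + (g$2)^2)"

definition Iinv :: "real \<Rightarrow> real^3 \<Rightarrow> real^3" where
  "Iinv c M = vector [M$1 / (2*c), M$2 / (2*c), M$3 / c]"

definition mu_vec :: "real \<Rightarrow> real \<Rightarrow> real \<Rightarrow> real \<Rightarrow> real \<Rightarrow> real^3 \<Rightarrow> real^3" where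
  "mu_vec c N n n1 n2 g = (let g1 = g$1; g2 = g$2; g3 = g$3 in vector [
     c * (- n*g1 - n1*g1^2 + 2*n1*g2^2 + n1*g3^2 - 3*n2*g1*g2 + N*g1 / (rho g)^3),
     c * (- n*g2 + 2*n2*g1^2 - n2*g2^2 + n2*g3^2 - 3*n1*g1*g2 + N*g2 / (rho g)^3),
     - c * g3 * (3*n + 5*n1*g1 + 5*n2*g2 + N*g3 / rho g)])"

definition mu'_vec :: "real \<Rightarrow> real \<Rightarrow> real \<Rightarrow> real \<Rightarrow> real \<Rightarrow> real^3 \<Rightarrow> real^3" where
  "mu'_vec c N n n1 n2 g = (let g1 = g$1; g2 = g$2; g3 = g$3 in vector [
     c * (- n*g1 - n1*g1^2 + 2*n1*g2^2 + n1*g3^2 - 3*n2*g1*g2 + N*g1 / (rho g)^3),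
     c * (- n*g2 + 2*n2*g1^2 - n2*g2^2 + n2*g3^2 - 3*n1*g1*g2 + N*g2 / (rho g)^3),
     - c * g3 * (3*n + 5*n1*g1 + 5*n2*g2 - N * (g3^2 + 1) / (rho g)^3)])"

definition U_pot :: "real \<Rightarrow> real \<Rightarrow> real \<Rightarrow> real \<Rightarrow> real \<Rightarrow> real \<Rightarrow> real \<Rightarrow> real \<Rightarrow> real^3 \<Rightarrow> real" where
  "U_pot c N n n1 n2 a1 a2 \<epsilon> g = c * (a1 * g$1 + a2 * g$2) + \<epsilon> / rho g
     - 1/2 * c * (n + n1 * g$1 + n2 * g$2 + N / rho g)^2 * (2*(g$1)^2 + 2*(g$2)^2 + (g$3)^2)"

definition phi_fun :: "real \<Rightarrow> real \<Rightarrow> real \<Rightarrow> real \<Rightarrow> real \<Rightarrow> real^3 \<Rightarrow> real" where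
  "phi_fun c N n n1 n2 g = c * (n + n1 * g$1 + n2 * g$2 + N / rho g) * (2*(g$1)^2 + 2*(g$2)^2 + (g$3)^2)"

definition psi_fun :: "real \<Rightarrow> real \<Rightarrow> real \<Rightarrow> real \<Rightarrow> real \<Rightarrow> real^3 \<Rightarrow> real" where
  "psi_fun c N n n1 n2 g = - c * (5*n + 7*n1 * g$1 + 7*n2 * g$2
      + N * (2 * (rho g)^2 - (g$3)^2 - 1) / (rho g)^3)"

definition I2_fun :: "real \<Rightarrow> real \<Rightarrow> real \<Rightarrow> real \<Rightarrow> real \<Rightarrow> real^6 \<Rightarrow> real" where
  "I2_fun c N n n1 n2 x = Mv x \<bullet> gv x
     + c * (n + n1 * gv x $ 1 + n2 * gv x $ 2 + N / rho (gv x)) * (2*(gv x $ 1)^2 + 2*(gv x $ 2)^2 + (gv x $ 3)^2)"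

definition field :: "real \<Rightarrow> (real^3 \<Rightarrow> real^3) \<Rightarrow> (real^3 \<Rightarrow> real) \<Rightarrow> real^6 \<Rightarrow> real^6" where
  "field c mu U x = pack6
     (- cross3 (Iinv c (Mv x)) (Mv x + mu (gv x)) + cross3 (gv x) (grad_r U (gv x)))
     (cross3 (gv x) (Iinv c (Mv x)))"

end

theory Submission
  imports Defs
begin

(* Part (b) consists of three claims about the modified field mu'.
   (1) The decomposition mu' = psi gamma + grad phi is a direct computation of the
       partial derivatives of phi on D.
   (2) A general Jacobi criterion: for an antisymmetric matrix field P the cyclic sum
       of {f,{g,h}} reduces, via symmetry of second partial derivatives (Schwarz),
       to an algebraic cyclic condition on P and its first derivatives.  For the
       matrix Pi_mu, with mu depending only on gamma, that condition is exactly
       gamma . curl mu = 0, which we check for mu' by computing its partials.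
   (3) I2 = M . gamma + phi(gamma) is smooth on R^3 x D (it lies in a class of
       functions built from coordinates and 1/rho, closed under partial
       derivatives) and Pi_mu' grad I2 = 0 follows from the decomposition (1).
   Part (a): along a solution of x' = F x the derivative of I2 is the Lie
   derivative I2'(x)(F x).  At x0 = (1,0,0,0,1,1) it equals -3N/2, nonzero for
   N <> 0, hence nonzero near x0.  The field F is locally Lipschitz on the phase
   domain, so a Picard iteration (Banach fixed point) yields a solution through
   x0 that stays in that neighbourhood; by the mean value theorem I2 is not
   constant along it. *)

lemma exhaust_6:
  fixes x :: 6
  shows "x = 1 \<or> x = 2 \<or> x = 3 \<or> x = 4 \<or> x = 5 \<or> x = 6"
proof (induct x)
  case (of_int z)
  then have "z = 0 \<or> z = 1 \<or> z = 2 \<or> z = 3 \<or> z = 4 \<or> z = 5" by fastforce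
  then show ?case by auto
qed

lemma sum_6: "sum f (UNIV::6 set) = f 1 + f 2 + f 3 + f 4 + f 5 + f 6"
proof -
  have univ: "UNIV = {1, 2, 3, 4, 5, 6::6}" using exhaust_6 by auto
  show ?thesis unfolding univ by (simp add: ac_simps)
qed

lemma forall_6: "(\<forall>i::6. P i) \<longleftrightarrow> P 1 \<and> P 2 \<and> P 3 \<and> P 4 \<and> P 5 \<and> P 6"
  by (metis exhaust_6)

lemma vector_6 [simp]:
  "(vector [x1,x2,x3,x4,x5,x6] ::('a::zero)^6)$1 = x1"
  "(vector [x1,x2,x3,x4,x5,x6] ::('a::zero)^6)$2 = x2"
  "(vector [x1,x2,x3,x4,x5,x6] ::('a::zero)^6)$3 = x3"
  "(vector [x1,x2,x3,x4,x5,x6] ::('a::zero)^6)$4 = x4"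
  "(vector [x1,x2,x3,x4,x5,x6] ::('a::zero)^6)$5 = x5"
  "(vector [x1,x2,x3,x4,x5,x6] ::('a::zero)^6)$6 = x6"
  unfolding vector_def by simp_all

lemma six_distinct [simp]:
  "(1::6) \<noteq> 2" "(1::6) \<noteq> 3" "(1::6) \<noteq> 4" "(1::6) \<noteq> 5" "(1::6) \<noteq> 6"
  "(2::6) \<noteq> 3" "(2::6) \<noteq> 4" "(2::6) \<noteq> 5" "(2::6) \<noteq> 6" "(3::6) \<noteq> 4"
  "(3::6) \<noteq> 5" "(3::6) \<noteq> 6" "(4::6) \<noteq> 5" "(4::6) \<noteq> 6" "(5::6) \<noteq> 6"
  by simp_all

lemma axis_nth_6 [simp]: "axis (i::6) (1::real) $ k = (if k = i then 1 else 0)"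
  by (simp add: axis_def)

lemma axis_nth_3 [simp]: "axis (i::3) (1::real) $ k = (if k = i then 1 else 0)"
  by (simp add: axis_def)

lemma gv_nth [simp]: "gv x $ 1 = x $ 4" "gv x $ 2 = x $ 5" "gv x $ 3 = x $ 6"
  unfolding gv_def by simp_all

lemma Mv_nth [simp]: "Mv x $ 1 = x $ 1" "Mv x $ 2 = x $ 2" "Mv x $ 3 = x $ 3"
  unfolding Mv_def by simp_all

definition pd :: "(real^'n \<Rightarrow> real) \<Rightarrow> 'n \<Rightarrow> real^'n \<Rightarrow> real" where
  "pd f i x = frechet_derivative f (at x) (axis i 1)"

lemma grad_r_nth: "grad_r f x $ i = pd f i x"
  unfolding grad_r_def pd_def by simp

lemma pd_eqI: "(f has_derivative D) (at x) \<Longrightarrow> D (axis k 1) = v \<Longrightarrow> pd f k x = v"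
  unfolding pd_def using frechet_derivative_at by metis

lemma vec_nth_has_derivative [derivative_intros]:
  "((\<lambda>x. x $ i) has_derivative (\<lambda>h. h $ i)) F"
  by (rule bounded_linear_imp_has_derivative[OF bounded_linear_vec_nth])

lemma vec_nth_differentiable [derivative_intros]: "(\<lambda>x. x $ i) differentiable F"
  using vec_nth_has_derivative differentiable_def by blast

lemma pd_const [simp]: "pd (\<lambda>y. c) j x = 0"
  by (rule pd_eqI[where D = "\<lambda>_. 0"]) simp_all

lemma pd_coord [simp]: "pd (\<lambda>y. y $ k) j x = axis j 1 $ k"
  by (rule pd_eqI[OF vec_nth_has_derivative]) (rule refl)

lemma pd_add:
  assumes "f differentiable (at x)" "g differentiable (at x)"
  shows "pd (\<lambda>y. f y + g y) j x = pd f j x + pd g j x"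
proof (rule pd_eqI)
  show "((\<lambda>y. f y + g y) has_derivative
      (\<lambda>h. frechet_derivative f (at x) h + frechet_derivative g (at x) h)) (at x)"
    using assms by (intro has_derivative_add) (simp_all add: frechet_derivative_works[symmetric])
qed (simp add: pd_def)

lemma pd_mult:
  assumes "f differentiable (at x)" "g differentiable (at x)"
  shows "pd (\<lambda>y. f y * g y) j x = f x * pd g j x + pd f j x * g x"
proof (rule pd_eqI)
  show "((\<lambda>y. f y * g y) has_derivative
      (\<lambda>h. f x * frechet_derivative g (at x) h + frechet_derivative f (at x) h * g x)) (at x)"
    using assms by (intro has_derivative_mult) (simp_all add: frechet_derivative_works[symmetric])
qed (simp add: pd_def)

lemma pd_diff:
  assumes "f differentiable (at x)" "g differentiable (at x)"
  shows "pd (\<lambda>y. f y - g y) j x = pd f j x - pd g j x"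
proof (rule pd_eqI)
  show "((\<lambda>y. f y - g y) has_derivative
      (\<lambda>h. frechet_derivative f (at x) h - frechet_derivative g (at x) h)) (at x)"
    using assms by (intro has_derivative_diff) (simp_all add: frechet_derivative_works[symmetric])
qed (simp add: pd_def)

lemma pd_uminus:
  assumes "f differentiable (at x)"
  shows "pd (\<lambda>y. - f y) j x = - pd f j x"
proof (rule pd_eqI)
  show "((\<lambda>y. - f y) has_derivative (\<lambda>h. - frechet_derivative f (at x) h)) (at x)"
    using assms by (intro has_derivative_minus) (simp add: frechet_derivative_works[symmetric])
qed (simp add: pd_def)

text \<open>A linear functional on R^6 is determined by its values on the coordinate axes;
  hence a directional derivative is the sum of partial derivatives.\<close>
lemma frechet_derivative_expand:
  fixes f :: "real^6 \<Rightarrow> real"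
  assumes "f differentiable (at x)"
  shows "frechet_derivative f (at x) v = (\<Sum>j\<in>UNIV. v $ j * pd f j x)"
proof -
  have lin: "linear (frechet_derivative f (at x))" by (rule linear_frechet_derivative[OF assms])
  have "v = (\<Sum>j\<in>UNIV. (v $ j) *\<^sub>R (axis j 1 :: real^6))"
    using exhaust_6 by (auto simp add: vec_eq_iff sum_6)
  then have "frechet_derivative f (at x) v = frechet_derivative f (at x) (\<Sum>j\<in>UNIV. (v $ j) *\<^sub>R axis j 1)"
    by simp
  also have "\<dots> = (\<Sum>j\<in>UNIV. v $ j * pd f j x)"
    by (simp add: linear_sum[OF lin] linear_scale[OF lin] pd_def)
  finally show ?thesis .
qed

lemma gv_linear: "bounded_linear gv"
proof -
  have "linear gv" by (rule linearI) (simp_all add: vec_eq_iff forall_3)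
  then show ?thesis using linear_conv_bounded_linear by blast
qed

lemma differentiable_gv_comp:
  "f differentiable (at (gv x)) \<Longrightarrow> (\<lambda>y. f (gv y)) differentiable (at x)"
  using differentiable_chain_at[OF bounded_linear_imp_differentiable[OF gv_linear]] by (simp add: o_def)

lemma pd_gv_comp:
  fixes f :: "real^3 \<Rightarrow> real"
  assumes "f differentiable (at (gv x))"
  shows "pd (\<lambda>y. f (gv y)) 1 x = 0" "pd (\<lambda>y. f (gv y)) 2 x = 0" "pd (\<lambda>y. f (gv y)) 3 x = 0"
    "pd (\<lambda>y. f (gv y)) 4 x = pd f 1 (gv x)" "pd (\<lambda>y. f (gv y)) 5 x = pd f 2 (gv x)"
    "pd (\<lambda>y. f (gv y)) 6 x = pd f 3 (gv x)"
proof -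
  let ?D = "frechet_derivative f (at (gv x))"
  have lin: "linear ?D" using assms frechet_derivative_works has_derivative_linear by blast
  have "((\<lambda>y. f (gv y)) has_derivative (\<lambda>h. ?D (gv h))) (at x)"
    using has_derivative_compose[OF bounded_linear_imp_has_derivative[OF gv_linear]
        frechet_derivative_works[THEN iffD1, OF assms]] by (simp add: o_def)
  then have pd_eq: "pd (\<lambda>y. f (gv y)) j x = ?D (gv (axis j 1))" for j
    by (rule pd_eqI) (rule refl)
  have axes: "gv (axis 1 1) = 0" "gv (axis 2 1) = 0" "gv (axis 3 1) = 0"
    "gv (axis 4 1) = axis 1 1" "gv (axis 5 1) = axis 2 1" "gv (axis 6 1) = axis 3 1"
    by (simp_all add: vec_eq_iff forall_3)
  show "pd (\<lambda>y. f (gv y)) 1 x = 0" "pd (\<lambda>y. f (gv y)) 2 x = 0" "pd (\<lambda>y. f (gv y)) 3 x = 0"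
    "pd (\<lambda>y. f (gv y)) 4 x = pd f 1 (gv x)" "pd (\<lambda>y. f (gv y)) 5 x = pd f 2 (gv x)"
    "pd (\<lambda>y. f (gv y)) 6 x = pd f 3 (gv x)"
    unfolding pd_eq axes using linear_0[OF lin] by (simp_all add: pd_def)
qed

section \<open>Symmetry of second partial derivatives\<close>

lemma line_has_derivative:
  fixes h :: "real^'n \<Rightarrow> real"
  assumes "h differentiable (at (y + a *\<^sub>R axis l 1))"
  shows "((\<lambda>t. h (y + t *\<^sub>R axis l 1)) has_real_derivative pd h l (y + a *\<^sub>R axis l 1)) (at a)"
proof -
  let ?e = "axis l 1 :: real^'n"
  let ?F = "frechet_derivative h (at (y + a *\<^sub>R ?e))"
  have hF: "(h has_derivative ?F) (at (y + a *\<^sub>R ?e))"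
    using assms frechet_derivative_works by blast
  have lin: "linear ?F" using hF has_derivative_linear by blast
  have l: "((\<lambda>t. y + t *\<^sub>R ?e) has_derivative (\<lambda>t. t *\<^sub>R ?e)) (at a)"
    by (auto intro!: derivative_eq_intros)
  have "((\<lambda>t. h (y + t *\<^sub>R ?e)) has_derivative (\<lambda>t. ?F (t *\<^sub>R ?e))) (at a)"
    using has_derivative_compose[OF l hF] by (simp add: o_def)
  moreover have "(\<lambda>t. ?F (t *\<^sub>R ?e)) = (*) (?F ?e)"
    using lin by (auto simp: linear_scale mult.commute)
  ultimately show ?thesis unfolding has_field_derivative_def pd_def by simp
qed

text \<open>Two applications of the mean value theorem: the second difference of h over a square
  of side s equals s^2 times a mixed partial derivative at a point near x.\<close>
lemma second_difference:
  fixes h :: "real^'n \<Rightarrow> real"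
  assumes s: "s > 0"
    and dh: "\<And>y. norm (y - x) \<le> 2 * s \<Longrightarrow> h differentiable (at y)"
    and dhl: "\<And>y. norm (y - x) \<le> 2 * s \<Longrightarrow> pd h l differentiable (at y)"
  shows "\<exists>p. norm (p - x) \<le> 2 * s \<and>
     h (x + s *\<^sub>R axis l 1 + s *\<^sub>R axis j 1) - h (x + s *\<^sub>R axis l 1) - h (x + s *\<^sub>R axis j 1) + h x
       = s * s * pd (pd h l) j p"
proof -
  define e where "e = (axis l 1 :: real^'n)"
  define d where "d = (axis j 1 :: real^'n)"
  have near: "norm ((x + a *\<^sub>R e + b *\<^sub>R d) - x) \<le> 2 * s"
    if "0 \<le> a" "a \<le> s" "0 \<le> b" "b \<le> s" for a b
  proof -
    have "norm (a *\<^sub>R e + b *\<^sub>R d) \<le> norm (a *\<^sub>R e) + norm (b *\<^sub>R d)" by (rule norm_triangle_ineq)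
    also have "\<dots> = \<bar>a\<bar> + \<bar>b\<bar>" by (simp add: e_def d_def)
    finally show ?thesis using that by simp
  qed
  define phi where "phi a = h (x + s *\<^sub>R d + a *\<^sub>R e) - h (x + a *\<^sub>R e)" for a
  have "\<exists>z. 0 < z \<and> z < s \<and> phi s - phi 0 = (s - 0) * (pd h l (x + s *\<^sub>R d + z *\<^sub>R e) - pd h l (x + z *\<^sub>R e))"
  proof (rule MVT2[OF s])
    fix a assume a: "0 \<le> a" "a \<le> s"
    have "h differentiable (at (x + s *\<^sub>R d + a *\<^sub>R e))" "h differentiable (at (x + a *\<^sub>R e))"
      using dh near[OF a, of s] dh near[OF a, of 0] s by (simp_all add: algebra_simps)
    then show "(phi has_real_derivative (pd h l (x + s *\<^sub>R d + a *\<^sub>R e) - pd h l (x + a *\<^sub>R e))) (at a)"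
      unfolding phi_def e_def by (intro DERIV_diff line_has_derivative) (simp_all add: e_def)
  qed
  then obtain z where z: "0 < z" "z < s"
    and zeq: "phi s - phi 0 = s * (pd h l (x + s *\<^sub>R d + z *\<^sub>R e) - pd h l (x + z *\<^sub>R e))" by auto
  define psi where "psi b = pd h l (x + z *\<^sub>R e + b *\<^sub>R d)" for b
  have "\<exists>w. 0 < w \<and> w < s \<and> psi s - psi 0 = (s - 0) * pd (pd h l) j (x + z *\<^sub>R e + w *\<^sub>R d)"
  proof (rule MVT2[OF s])
    fix b assume b: "0 \<le> b" "b \<le> s"
    have "pd h l differentiable (at (x + z *\<^sub>R e + b *\<^sub>R d))"
      using dhl near[of z b] z b by simp
    then show "(psi has_real_derivative pd (pd h l) j (x + z *\<^sub>R e + b *\<^sub>R d)) (at b)"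
      unfolding psi_def d_def by (intro line_has_derivative) (simp add: d_def)
  qed
  then obtain w where w: "0 < w" "w < s"
    and weq: "psi s - psi 0 = s * pd (pd h l) j (x + z *\<^sub>R e + w *\<^sub>R d)" by auto
  have "h (x + s *\<^sub>R e + s *\<^sub>R d) - h (x + s *\<^sub>R e) - h (x + s *\<^sub>R d) + h x = phi s - phi 0"
    unfolding phi_def by (simp add: algebra_simps)
  also have "\<dots> = s * s * pd (pd h l) j (x + z *\<^sub>R e + w *\<^sub>R d)"
    using weq unfolding zeq psi_def by (simp add: algebra_simps)
  finally have "h (x + s *\<^sub>R e + s *\<^sub>R d) - h (x + s *\<^sub>R e) - h (x + s *\<^sub>R d) + h x
      = s * s * pd (pd h l) j (x + z *\<^sub>R e + w *\<^sub>R d)" .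
  moreover have "norm ((x + z *\<^sub>R e + w *\<^sub>R d) - x) \<le> 2 * s" using near[of z w] z w by simp
  ultimately show ?thesis unfolding e_def d_def by blast
qed

lemma mixed_partials_commute:
  fixes h :: "real^'n \<Rightarrow> real"
  assumes S: "open S" "x \<in> S"
    and dh: "\<And>y. y \<in> S \<Longrightarrow> h differentiable (at y)"
    and dhl: "\<And>y. y \<in> S \<Longrightarrow> pd h l differentiable (at y)"
    and dhj: "\<And>y. y \<in> S \<Longrightarrow> pd h j differentiable (at y)"
    and c1: "continuous (at x) (pd (pd h l) j)"
    and c2: "continuous (at x) (pd (pd h j) l)"
  shows "pd (pd h l) j x = pd (pd h j) l x"
proof (rule ccontr)
  assume ne: "pd (pd h l) j x \<noteq> pd (pd h j) l x"
  define eps where "eps = \<bar>pd (pd h l) j x - pd (pd h j) l x\<bar> / 2"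
  have eps: "eps > 0" using ne unfolding eps_def by simp
  obtain d0 where d0: "d0 > 0" "ball x d0 \<subseteq> S" using S open_contains_ball by blast
  obtain d1 where d1: "d1 > 0" "\<And>y. dist y x < d1 \<Longrightarrow> dist (pd (pd h l) j y) (pd (pd h l) j x) < eps"
    using c1 eps unfolding continuous_at_eps_delta by blast
  obtain d2 where d2: "d2 > 0" "\<And>y. dist y x < d2 \<Longrightarrow> dist (pd (pd h j) l y) (pd (pd h j) l x) < eps"
    using c2 eps unfolding continuous_at_eps_delta by blast
  define s where "s = min d0 (min d1 d2) / 3"
  have s: "s > 0" using d0 d1 d2 unfolding s_def by simp
  have close: "dist y x < d0" "dist y x < d1" "dist y x < d2" if "norm (y - x) \<le> 2 * s" for y
    using that s d0(1) d1(1) d2(1) unfolding s_def dist_norm by linarith+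
  have inS: "y \<in> S" if "norm (y - x) \<le> 2 * s" for y
    using close(1)[OF that] d0(2) by (auto simp: dist_commute)
  obtain p where p: "norm (p - x) \<le> 2 * s" and peq:
     "h (x + s *\<^sub>R axis l 1 + s *\<^sub>R axis j 1) - h (x + s *\<^sub>R axis l 1) - h (x + s *\<^sub>R axis j 1) + h x
       = s * s * pd (pd h l) j p"
    using second_difference[OF s, of x h l j] inS dh dhl by blast
  obtain q where q: "norm (q - x) \<le> 2 * s" and qeq:
     "h (x + s *\<^sub>R axis j 1 + s *\<^sub>R axis l 1) - h (x + s *\<^sub>R axis j 1) - h (x + s *\<^sub>R axis l 1) + h x
       = s * s * pd (pd h j) l q"
    using second_difference[OF s, of x h j l] inS dh dhj by blast
  have "s * s * pd (pd h l) j p = s * s * pd (pd h j) l q"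
    using peq qeq by (simp add: algebra_simps)
  then have pq: "pd (pd h l) j p = pd (pd h j) l q" using s by simp
  have "\<bar>pd (pd h l) j p - pd (pd h l) j x\<bar> < eps" "\<bar>pd (pd h j) l q - pd (pd h j) l x\<bar> < eps"
    using d1(2)[OF close(2)[OF p]] d2(2)[OF close(3)[OF q]] by (simp_all add: dist_real_def)
  then show False using pq unfolding eps_def by (simp add: abs_if split: if_splits)
qed

lemma smooth_pd: "smooth_on S u \<Longrightarrow> smooth_on S (pd u i)"
  unfolding smooth_on_def pd_def by (metis Ck_on.simps(2))

lemma smooth_differentiable: "open S \<Longrightarrow> smooth_on S u \<Longrightarrow> y \<in> S \<Longrightarrow> u differentiable (at y)"
  unfolding smooth_on_def by (metis Ck_on.simps(2) differentiable_on_eq_differentiable_at)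

lemma smooth_continuous: "open S \<Longrightarrow> smooth_on S u \<Longrightarrow> y \<in> S \<Longrightarrow> continuous (at y) u"
  unfolding smooth_on_def by (metis Ck_on.simps(1) continuous_on_eq_continuous_at)

lemma smooth_mixed_partials:
  assumes "open S" "x \<in> S" "smooth_on S u"
  shows "pd (pd u i) j x = pd (pd u j) i x"
proof (rule mixed_partials_commute[OF assms(1,2)])
  show "u differentiable (at y)" "pd u i differentiable (at y)" "pd u j differentiable (at y)"
    if "y \<in> S" for y
    using that smooth_differentiable[OF assms(1)] smooth_pd[OF assms(3)] assms(3) by blast+
  show "continuous (at x) (pd (pd u i) j)" "continuous (at x) (pd (pd u j) i)"
    using smooth_continuous[OF assms(1) smooth_pd[OF smooth_pd[OF assms(3)]] assms(2)] by blast+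
qed

lemma frechet_derivative_cong:
  assumes "open S" "x \<in> S" "\<And>y. y \<in> S \<Longrightarrow> f y = g y"
  shows "frechet_derivative f (at x) = frechet_derivative g (at x)"
proof -
  have "(f has_derivative f') (at x) \<longleftrightarrow> (g has_derivative f') (at x)" for f'
    using has_derivative_transform_within_open[OF _ assms(1,2)] assms(3) by metis
  then show ?thesis unfolding frechet_derivative_def by simp
qed

lemma differentiable_cong:
  assumes "open S" "x \<in> S" "\<And>y. y \<in> S \<Longrightarrow> f y = g y"
  shows "f differentiable (at x) \<longleftrightarrow> g differentiable (at x)"
  unfolding differentiable_def
  using has_derivative_transform_within_open[OF _ assms(1,2)] assms(3) by metis

section \<open>A criterion for the Jacobi identity\<close>

lemma sum_rotate4:
  fixes X :: "'n \<Rightarrow> 'n \<Rightarrow> 'n \<Rightarrow> 'n \<Rightarrow> real"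
  shows "(\<Sum>i\<in>UNIV. \<Sum>j\<in>UNIV. \<Sum>a\<in>UNIV. \<Sum>b\<in>UNIV. X b a i j)
       = (\<Sum>i\<in>UNIV. \<Sum>j\<in>UNIV. \<Sum>a\<in>UNIV. \<Sum>b\<in>UNIV. X i j a b)"
proof -
  have "(\<Sum>p\<in>UNIV. \<Sum>q\<in>UNIV. \<Sum>r\<in>UNIV. \<Sum>s\<in>UNIV. X s r p q)
      = (\<Sum>p\<in>UNIV. \<Sum>q\<in>UNIV. \<Sum>s\<in>UNIV. \<Sum>r\<in>UNIV. X s r p q)"
    by (rule sum.cong[OF refl], rule sum.cong[OF refl], rule sum.swap)
  also have "\<dots> = (\<Sum>p\<in>UNIV. \<Sum>s\<in>UNIV. \<Sum>q\<in>UNIV. \<Sum>r\<in>UNIV. X s r p q)"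
    by (rule sum.cong[OF refl], rule sum.swap)
  also have "\<dots> = (\<Sum>s\<in>UNIV. \<Sum>p\<in>UNIV. \<Sum>q\<in>UNIV. \<Sum>r\<in>UNIV. X s r p q)"
    by (rule sum.swap)
  also have "\<dots> = (\<Sum>s\<in>UNIV. \<Sum>p\<in>UNIV. \<Sum>r\<in>UNIV. \<Sum>q\<in>UNIV. X s r p q)"
    by (rule sum.cong[OF refl], rule sum.cong[OF refl], rule sum.swap)
  also have "\<dots> = (\<Sum>s\<in>UNIV. \<Sum>r\<in>UNIV. \<Sum>p\<in>UNIV. \<Sum>q\<in>UNIV. X s r p q)"
    by (rule sum.cong[OF refl], rule sum.swap)
  finally show ?thesis .
qed

lemma sum_rotate3:
  fixes X :: "'n \<Rightarrow> 'n \<Rightarrow> 'n \<Rightarrow> real"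
  shows "(\<Sum>i\<in>UNIV. \<Sum>a\<in>UNIV. \<Sum>b\<in>UNIV. X b i a) = (\<Sum>i\<in>UNIV. \<Sum>a\<in>UNIV. \<Sum>b\<in>UNIV. X i a b)"
proof -
  have "(\<Sum>p\<in>UNIV. \<Sum>q\<in>UNIV. \<Sum>r\<in>UNIV. X r p q) = (\<Sum>p\<in>UNIV. \<Sum>r\<in>UNIV. \<Sum>q\<in>UNIV. X r p q)"
    by (rule sum.cong[OF refl], rule sum.swap)
  also have "\<dots> = (\<Sum>r\<in>UNIV. \<Sum>p\<in>UNIV. \<Sum>q\<in>UNIV. X r p q)"
    by (rule sum.swap)
  finally show ?thesis .
qed

lemma sum_move_second_last:
  fixes X :: "'n \<Rightarrow> 'n \<Rightarrow> 'n \<Rightarrow> 'n \<Rightarrow> real"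
  shows "(\<Sum>i\<in>UNIV. \<Sum>j\<in>UNIV. \<Sum>a\<in>UNIV. \<Sum>b\<in>UNIV. X i j a b)
       = (\<Sum>i\<in>UNIV. \<Sum>a\<in>UNIV. \<Sum>b\<in>UNIV. \<Sum>j\<in>UNIV. X i j a b)"
proof -
  have "(\<Sum>i\<in>UNIV. \<Sum>j\<in>UNIV. \<Sum>a\<in>UNIV. \<Sum>b\<in>UNIV. X i j a b)
      = (\<Sum>i\<in>UNIV. \<Sum>a\<in>UNIV. \<Sum>j\<in>UNIV. \<Sum>b\<in>UNIV. X i j a b)"
    by (rule sum.cong[OF refl], rule sum.swap)
  also have "\<dots> = (\<Sum>i\<in>UNIV. \<Sum>a\<in>UNIV. \<Sum>b\<in>UNIV. \<Sum>j\<in>UNIV. X i j a b)"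
    by (rule sum.cong[OF refl], rule sum.cong[OF refl], rule sum.swap)
  finally show ?thesis .
qed

text \<open>Coordinate form of the double bracket f,(g,h) at a point: F, G, H are the gradients,
  G2, H2 the Hessians of g, h, P the matrix and D j a b the j-th partial of its (a,b) entry.\<close>
definition double_bracket :: "('n \<Rightarrow> real) \<Rightarrow> ('n \<Rightarrow> real) \<Rightarrow> ('n \<Rightarrow> 'n \<Rightarrow> real) \<Rightarrow> ('n \<Rightarrow> real)
   \<Rightarrow> ('n \<Rightarrow> 'n \<Rightarrow> real) \<Rightarrow> ('n \<Rightarrow> 'n \<Rightarrow> real) \<Rightarrow> ('n \<Rightarrow> 'n \<Rightarrow> 'n \<Rightarrow> real) \<Rightarrow> real" where
  "double_bracket F G G2 H H2 P D = (\<Sum>i\<in>UNIV. F i * (\<Sum>j\<in>UNIV. P i j * (\<Sum>a\<in>UNIV. \<Sum>b\<in>UNIV.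
      G2 a j * P a b * H b + G a * D j a b * H b + G a * P a b * H2 b j)))"

definition hess_term :: "('n \<Rightarrow> real) \<Rightarrow> ('n \<Rightarrow> 'n \<Rightarrow> real) \<Rightarrow> ('n \<Rightarrow> real) \<Rightarrow> ('n \<Rightarrow> 'n \<Rightarrow> real) \<Rightarrow> real" where
  "hess_term F G2 H P = (\<Sum>i\<in>UNIV. \<Sum>j\<in>UNIV. \<Sum>a\<in>UNIV. \<Sum>b\<in>UNIV. F i * P i j * G2 a j * P a b * H b)"

definition matrix_term :: "('n \<Rightarrow> real) \<Rightarrow> ('n \<Rightarrow> real) \<Rightarrow> ('n \<Rightarrow> real) \<Rightarrow> ('n \<Rightarrow> 'n \<Rightarrow> real)
   \<Rightarrow> ('n \<Rightarrow> 'n \<Rightarrow> 'n \<Rightarrow> real) \<Rightarrow> real" where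
  "matrix_term F G H P D = (\<Sum>i\<in>UNIV. \<Sum>j\<in>UNIV. \<Sum>a\<in>UNIV. \<Sum>b\<in>UNIV. F i * P i j * G a * D j a b * H b)"

lemma double_bracket_split:
  "double_bracket F G G2 H H2 P D = hess_term F G2 H P + matrix_term F G H P D
     + (\<Sum>i\<in>UNIV. \<Sum>j\<in>UNIV. \<Sum>a\<in>UNIV. \<Sum>b\<in>UNIV. F i * P i j * G a * P a b * H2 b j)"
  unfolding double_bracket_def hess_term_def matrix_term_def
  by (simp add: sum_distrib_left sum.distrib algebra_simps)

lemma hess_terms_cancel:
  assumes sym: "\<And>i j. H2 i j = H2 j i" and anti: "\<And>a b. P a b = - P b a"
  shows "(\<Sum>i\<in>UNIV. \<Sum>j\<in>UNIV. \<Sum>a\<in>UNIV. \<Sum>b\<in>UNIV. F i * P i j * G a * P a b * H2 b j)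
       + hess_term G H2 F P = 0"
proof -
  have "G i * P i j * H2 a j * P a b * F b = - (F b * P b a * G i * P i j * H2 j a)" for i j a b
    using anti[of a b] sym[of a j] by simp
  then have "hess_term G H2 F P = (\<Sum>i\<in>UNIV. \<Sum>j\<in>UNIV. \<Sum>a\<in>UNIV. \<Sum>b\<in>UNIV. - (F b * P b a * G i * P i j * H2 j a))"
    unfolding hess_term_def by presburger
  also have "\<dots> = (\<Sum>i\<in>UNIV. \<Sum>j\<in>UNIV. \<Sum>a\<in>UNIV. \<Sum>b\<in>UNIV. - (F i * P i j * G a * P a b * H2 b j))"
    by (rule sum_rotate4[where X = "\<lambda>i j a b. - (F i * P i j * G a * P a b * H2 b j)"])
  finally show ?thesis by (simp add: sum_negf)
qed

lemma matrix_terms_vanish: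
  assumes J: "\<And>i a b. (\<Sum>j\<in>UNIV. P i j * D j a b + P a j * D j b i + P b j * D j i a) = 0"
  shows "matrix_term F G H P D + matrix_term G H F P D + matrix_term H F G P D = 0"
proof -
  define K where "K i a b = (\<Sum>j\<in>UNIV. P i j * D j a b)" for i a b
  have e: "matrix_term F G H P D = (\<Sum>i\<in>UNIV. \<Sum>a\<in>UNIV. \<Sum>b\<in>UNIV. F i * G a * H b * K i a b)"
    for F G H
  proof -
    have "matrix_term F G H P D = (\<Sum>i\<in>UNIV. \<Sum>a\<in>UNIV. \<Sum>b\<in>UNIV. \<Sum>j\<in>UNIV. F i * P i j * G a * D j a b * H b)"
      unfolding matrix_term_def by (rule sum_move_second_last)
    then show ?thesis by (simp add: K_def sum_distrib_left mult_ac)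
  qed
  have "matrix_term G H F P D = (\<Sum>i\<in>UNIV. \<Sum>a\<in>UNIV. \<Sum>b\<in>UNIV. (\<lambda>i a b. F i * G a * H b * K a b i) b i a)"
    unfolding e by (simp add: mult_ac)
  also have "\<dots> = (\<Sum>i\<in>UNIV. \<Sum>a\<in>UNIV. \<Sum>b\<in>UNIV. F i * G a * H b * K a b i)"
    by (rule sum_rotate3)
  finally have e2: "matrix_term G H F P D = \<dots>" .
  have "matrix_term H F G P D = (\<Sum>i\<in>UNIV. \<Sum>a\<in>UNIV. \<Sum>b\<in>UNIV. (\<lambda>i a b. H i * F a * G b * K i a b) b i a)"
    unfolding e by (rule sum_rotate3[symmetric])
  then have e3: "matrix_term H F G P D = (\<Sum>i\<in>UNIV. \<Sum>a\<in>UNIV. \<Sum>b\<in>UNIV. F i * G a * H b * K b i a)"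
    by (simp add: mult_ac)
  have "matrix_term F G H P D + matrix_term G H F P D + matrix_term H F G P D
     = (\<Sum>i\<in>UNIV. \<Sum>a\<in>UNIV. \<Sum>b\<in>UNIV. F i * G a * H b * (K i a b + K a b i + K b i a))"
    unfolding e2 e3 e[of F G H] by (simp add: sum.distrib algebra_simps)
  also have "\<dots> = 0"
    using J by (simp add: K_def sum.distrib[symmetric])
  finally show ?thesis .
qed

lemma cyclic_double_bracket_zero:
  assumes "\<And>i j. F2 i j = F2 j i" "\<And>i j. G2 i j = G2 j i" "\<And>i j. H2 i j = H2 j i"
    and anti: "\<And>a b. P a b = - P b a"
    and J: "\<And>i a b. (\<Sum>j\<in>UNIV. P i j * D j a b + P a j * D j b i + P b j * D j i a) = 0"
  shows "double_bracket F G G2 H H2 P D + double_bracket G H H2 F F2 P D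
       + double_bracket H F F2 G G2 P D = (0::real)"
  using hess_terms_cancel[of H2 P F G, OF assms(3) anti] hess_terms_cancel[of F2 P G H, OF assms(1) anti]
    hess_terms_cancel[of G2 P H F, OF assms(2) anti] matrix_terms_vanish[of P D F G H, OF J]
  unfolding double_bracket_split by linarith

lemma pbracket_sum: "pbracket P g h y = (\<Sum>a\<in>UNIV. \<Sum>b\<in>UNIV. pd g a y * P y $ a $ b * pd h b y)"
  unfolding pbracket_def grad_r_def inner_vec_def matrix_vector_mult_def pd_def
  by (simp add: sum_distrib_left mult.assoc)

lemma pd_pbracket:
  fixes P :: "real^6 \<Rightarrow> real^6^6"
  assumes dg: "\<And>a. pd g a differentiable (at x)" and dh: "\<And>b. pd h b differentiable (at x)"
    and dP: "\<And>a b. (\<lambda>y. P y $ a $ b) differentiable (at x)"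
  shows "pd (pbracket P g h) j x = (\<Sum>a\<in>UNIV. \<Sum>b\<in>UNIV.
      pd (pd g a) j x * P x $ a $ b * pd h b x + pd g a x * pd (\<lambda>y. P y $ a $ b) j x * pd h b x
      + pd g a x * P x $ a $ b * pd (pd h b) j x)"
proof -
  have eq: "pbracket P g h = (\<lambda>y. \<Sum>a\<in>UNIV. \<Sum>b\<in>UNIV. pd g a y * P y $ a $ b * pd h b y)"
    by (rule ext, rule pbracket_sum)
  have "((\<lambda>y. \<Sum>a\<in>UNIV. \<Sum>b\<in>UNIV. pd g a y * P y $ a $ b * pd h b y) has_derivative
     (\<lambda>v. \<Sum>a\<in>UNIV. \<Sum>b\<in>UNIV. pd g a x * P x $ a $ b * frechet_derivative (pd h b) (at x) v
        + (pd g a x * frechet_derivative (\<lambda>y. P y $ a $ b) (at x) v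
           + frechet_derivative (pd g a) (at x) v * P x $ a $ b) * pd h b x)) (at x)"
    using dg dh dP frechet_derivative_works
    by (intro has_derivative_sum has_derivative_mult) blast+
  then show ?thesis unfolding eq
    by (rule pd_eqI) (simp add: pd_def distrib_left distrib_right sum.distrib)
qed

theorem jacobi_criterion:
  fixes P :: "real^6 \<Rightarrow> real^6^6"
  assumes S: "open S" "x \<in> S"
    and sf: "smooth_on S f" and sg: "smooth_on S g" and sh: "smooth_on S h"
    and dP: "\<And>a b. (\<lambda>y. P y $ a $ b) differentiable (at x)"
    and anti: "\<And>a b. P x $ a $ b = - P x $ b $ a"
    and J: "\<And>i a b. (\<Sum>j\<in>UNIV. P x $ i $ j * pd (\<lambda>y. P y $ a $ b) j x
              + P x $ a $ j * pd (\<lambda>y. P y $ b $ i) j x + P x $ b $ j * pd (\<lambda>y. P y $ i $ a) j x) = 0"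
  shows "pbracket P f (pbracket P g h) x + pbracket P g (pbracket P h f) x
             + pbracket P h (pbracket P f g) x = 0"
proof -
  have d1: "pd u a differentiable (at x)" if "smooth_on S u" for u a
    using smooth_differentiable[OF S(1) smooth_pd[OF that] S(2)] .
  define grad where "grad u i = pd u i x" for u i
  define hess where "hess u i j = pd (pd u i) j x" for u i j
  define D where "D j a b = pd (\<lambda>y. P y $ a $ b) j x" for j a b
  have br: "pbracket P u (pbracket P v w) x
      = double_bracket (grad u) (grad v) (hess v) (grad w) (hess w) (\<lambda>a b. P x $ a $ b) D"
    if "smooth_on S v" "smooth_on S w" for u v w
  proof -
    have "pbracket P u (pbracket P v w) x
        = (\<Sum>i\<in>UNIV. pd u i x * (\<Sum>j\<in>UNIV. P x $ i $ j * pd (pbracket P v w) j x))"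
      unfolding pbracket_sum[of P u] by (simp add: sum_distrib_left mult.assoc)
    then show ?thesis
      unfolding double_bracket_def grad_def hess_def D_def
        pd_pbracket[OF d1[OF that(1)] d1[OF that(2)] dP] .
  qed
  have "double_bracket (grad f) (grad g) (hess g) (grad h) (hess h) (\<lambda>a b. P x $ a $ b) D
      + double_bracket (grad g) (grad h) (hess h) (grad f) (hess f) (\<lambda>a b. P x $ a $ b) D
      + double_bracket (grad h) (grad f) (hess f) (grad g) (hess g) (\<lambda>a b. P x $ a $ b) D = 0"
  proof (rule cyclic_double_bracket_zero)
    show "hess f i j = hess f j i" "hess g i j = hess g j i" "hess h i j = hess h j i" for i j
      unfolding hess_def using smooth_mixed_partials[OF S] sf sg sh by blast+
    show "P x $ a $ b = - P x $ b $ a" for a b by (rule anti)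
    show "(\<Sum>j\<in>UNIV. P x $ i $ j * D j a b + P x $ a $ j * D j b i + P x $ b $ j * D j i a) = 0"
      for i a b unfolding D_def by (rule J)
  qed
  then show ?thesis using br[OF sg sh] br[OF sh sf] br[OF sf sg] by simp
qed

section \<open>The matrix Pi_mu: Jacobi identity via the curl of mu\<close>

definition curl :: "(real^3 \<Rightarrow> real^3) \<Rightarrow> real^3 \<Rightarrow> real^3" where
  "curl mu g = vector [pd (\<lambda>g. mu g $ 3) 2 g - pd (\<lambda>g. mu g $ 2) 3 g,
                       pd (\<lambda>g. mu g $ 1) 3 g - pd (\<lambda>g. mu g $ 3) 1 g,
                       pd (\<lambda>g. mu g $ 2) 1 g - pd (\<lambda>g. mu g $ 1) 2 g]"

lemma Pi_mat_antisym: "Pi_mat mu x $ a $ b = - Pi_mat mu x $ b $ a"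
  using exhaust_6[of a] exhaust_6[of b] by (elim disjE) (simp_all add: Pi_mat_def Let_def)

lemmas Pi_entry_differentiable_intros =
  differentiable_add differentiable_diff differentiable_minus differentiable_const vec_nth_differentiable

lemma Pi_entry_differentiable:
  assumes "\<And>l. (\<lambda>y. mu y $ l) differentiable (at x)"
  shows "(\<lambda>y. Pi_mat mu y $ a $ b) differentiable (at x)"
  using exhaust_6[of a] exhaust_6[of b] assms
  by (elim disjE) (simp_all add: Pi_mat_def Let_def Pi_entry_differentiable_intros)

text \<open>Each entry of Pi_mu is affine in x and mu x; so its j-th partial is the same entry of
  Pi, evaluated at the unit vector e_j with mu replaced by its j-th partial.\<close>
lemma pd_Pi_entry:
  assumes "\<And>l. (\<lambda>y. mu y $ l) differentiable (at x)"
  shows "pd (\<lambda>y. Pi_mat mu y $ a $ b) j x = Pi_mat (\<lambda>_. \<chi> l. pd (\<lambda>y. mu y $ l) j x) (axis j 1) $ a $ b"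
  using exhaust_6[of a] exhaust_6[of b] assms
  by (elim disjE)
    (simp_all add: Pi_mat_def Let_def pd_add pd_diff pd_uminus Pi_entry_differentiable_intros del: axis_nth_6)

text \<open>For mu depending on gamma only, with partials m l k of its components, the cyclic
  condition of the Jacobi criterion reduces to gamma . curl mu = 0 (written out in the
  assumption).\<close>
lemma Pi_cyclic_condition:
  fixes x :: "real^6" and mu :: "real^6 \<Rightarrow> real^3" and m :: "3 \<Rightarrow> 3 \<Rightarrow> real"
  defines "dm \<equiv> (\<lambda>j::6. if j = 4 then vector [m 1 1, m 2 1, m 3 1] else if j = 5 then vector [m 1 2, m 2 2, m 3 2]
                  else if j = 6 then vector [m 1 3, m 2 3, m 3 3] else (0::real^3))"
  defines "D \<equiv> (\<lambda>j a b. Pi_mat (\<lambda>_. dm j) (axis j 1) $ a $ b)"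
  assumes curl: "x $ 5 * m 3 1 - x $ 6 * m 2 1 + (x $ 6 * m 1 2 - x $ 4 * m 3 2)
      + (x $ 4 * m 2 3 - x $ 5 * m 1 3) = 0"
  shows "(\<Sum>j\<in>UNIV. Pi_mat mu x $ i $ j * D j a b
              + Pi_mat mu x $ a $ j * D j b i + Pi_mat mu x $ b $ j * D j i a) = 0"
  using exhaust_6[of i] exhaust_6[of a] exhaust_6[of b]
  apply (elim disjE)
  apply (simp_all add: sum_6 D_def dm_def Pi_mat_def Let_def)
  using curl by linarith+

theorem poisson_of_curl_orthogonal:
  fixes mu :: "real^3 \<Rightarrow> real^3"
  assumes S: "open S"
    and dmu: "\<And>x l. x \<in> S \<Longrightarrow> (\<lambda>g. mu g $ l) differentiable (at (gv x))"
    and curl: "\<And>x. x \<in> S \<Longrightarrow> gv x \<bullet> curl mu (gv x) = 0"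
  shows "is_poisson_on (Pi_mat (\<lambda>x. mu (gv x))) S"
  unfolding is_poisson_on_def
proof (intro allI impI ballI)
  fix f g h x
  assume sm: "smooth_on S f \<and> smooth_on S g \<and> smooth_on S h" and x: "x \<in> S"
  have dmu6: "\<And>l. (\<lambda>y. mu (gv y) $ l) differentiable (at x)"
    using differentiable_gv_comp[OF dmu[OF x]] .
  define m where "m l k = pd (\<lambda>g. mu g $ l) k (gv x)" for l k
  have partials: "(\<chi> l. pd (\<lambda>y. mu (gv y) $ l) j x) =
     (if j = 4 then vector [m 1 1, m 2 1, m 3 1] else if j = 5 then vector [m 1 2, m 2 2, m 3 2]
      else if j = 6 then vector [m 1 3, m 2 3, m 3 3] else (0::real^3))" for j
    using exhaust_6[of j]
    by (elim disjE) (simp_all add: vec_eq_iff forall_3 m_def pd_gv_comp[OF dmu[OF x]])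
  have curl_m: "x $ 5 * m 3 1 - x $ 6 * m 2 1 + (x $ 6 * m 1 2 - x $ 4 * m 3 2)
      + (x $ 4 * m 2 3 - x $ 5 * m 1 3) = 0"
    using curl[OF x] by (simp add: inner_vec_def sum_3 curl_def m_def algebra_simps)
  show "pbracket (Pi_mat (\<lambda>x. mu (gv x))) f (pbracket (Pi_mat (\<lambda>x. mu (gv x))) g h) x
      + pbracket (Pi_mat (\<lambda>x. mu (gv x))) g (pbracket (Pi_mat (\<lambda>x. mu (gv x))) h f) x
      + pbracket (Pi_mat (\<lambda>x. mu (gv x))) h (pbracket (Pi_mat (\<lambda>x. mu (gv x))) f g) x = 0"
  proof (rule jacobi_criterion[OF S x])
    show "smooth_on S f" "smooth_on S g" "smooth_on S h" using sm by auto
    show "\<And>a b. (\<lambda>y. Pi_mat (\<lambda>x. mu (gv x)) y $ a $ b) differentiable (at x)"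
      by (rule Pi_entry_differentiable[OF dmu6])
    show "\<And>a b. Pi_mat (\<lambda>x. mu (gv x)) x $ a $ b = - Pi_mat (\<lambda>x. mu (gv x)) x $ b $ a"
      by (rule Pi_mat_antisym)
    show "\<And>i a b. (\<Sum>j\<in>UNIV. Pi_mat (\<lambda>x. mu (gv x)) x $ i $ j * pd (\<lambda>y. Pi_mat (\<lambda>x. mu (gv x)) y $ a $ b) j x
        + Pi_mat (\<lambda>x. mu (gv x)) x $ a $ j * pd (\<lambda>y. Pi_mat (\<lambda>x. mu (gv x)) y $ b $ i) j x
        + Pi_mat (\<lambda>x. mu (gv x)) x $ b $ j * pd (\<lambda>y. Pi_mat (\<lambda>x. mu (gv x)) y $ i $ a) j x) = 0"
      unfolding pd_Pi_entry[OF dmu6] partials by (rule Pi_cyclic_condition[OF curl_m])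
  qed
qed

lemma rho_pos: "g \<in> Dset \<Longrightarrow> rho g > 0"
  unfolding Dset_def rho_def by simp

lemma rho_nonzero [simp]: "g \<in> Dset \<Longrightarrow> rho g \<noteq> 0"
  using rho_pos by force

lemma rho_sq: "(rho g)^2 = (g$1)^2 + (g$2)^2"
  unfolding rho_def by simp

lemma rho_has_derivative [derivative_intros]:
  assumes "g \<in> Dset"
  shows "(rho has_derivative (\<lambda>h. (g$1 * h$1 + g$2 * h$2) / rho g)) (at g)"
proof -
  have p: "0 < (g$1)^2 + (g$2)^2" using assms unfolding Dset_def by simp
  then have ne: "(g$1)^2 + (g$2)^2 \<noteq> 0" by linarith
  have "((\<lambda>x. sqrt ((x$1)^2 + (x$2)^2)) has_derivative
        (\<lambda>h. (inverse (sqrt ((g$1)^2 + (g$2)^2)) / 2) * (2 * g$1 * h$1 + 2 * g$2 * h$2))) (at g)"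
    using p by (auto intro!: derivative_eq_intros simp: algebra_simps)
  then show ?thesis unfolding rho_def[abs_def]
    by (rule has_derivative_eq_rhs) (use ne in \<open>simp add: fun_eq_iff field_simps\<close>)
qed

lemma rho_differentiable [derivative_intros]: "g \<in> Dset \<Longrightarrow> rho differentiable (at g)"
  using rho_has_derivative differentiable_def by blast

lemma Phase_gv: "x \<in> Phase \<Longrightarrow> gv x \<in> Dset"
  unfolding Phase_def by simp

lemma open_Phase: "open Phase"
proof -
  have "Phase = {x::real^6. 0 < (x$4)^2 + (x$5)^2}"
    unfolding Phase_def Dset_def by simp
  also have "open \<dots>"
    by (intro open_Collect_less continuous_intros)
  finally show ?thesis .
qed

section \<open>Part (b): the decomposition of mu' and the Poisson property\<close>

context
  fixes c N n n1 n2 :: real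
begin

lemma mu'_components:
  "(\<lambda>g. mu'_vec c N n n1 n2 g $ 1) = (\<lambda>g. c * (- n*g$1 - n1*(g$1)^2 + 2*n1*(g$2)^2 + n1*(g$3)^2
      - 3*n2*g$1*g$2 + N*g$1 / (rho g)^3))"
  "(\<lambda>g. mu'_vec c N n n1 n2 g $ 2) = (\<lambda>g. c * (- n*g$2 + 2*n2*(g$1)^2 - n2*(g$2)^2 + n2*(g$3)^2
      - 3*n1*g$1*g$2 + N*g$2 / (rho g)^3))"
  "(\<lambda>g. mu'_vec c N n n1 n2 g $ 3) = (\<lambda>g. - c * g$3 * (3*n + 5*n1*g$1 + 5*n2*g$2
      - N * ((g$3)^2 + 1) / (rho g)^3))"
  unfolding mu'_vec_def Let_def by simp_all

lemma mu'_differentiable: "g \<in> Dset \<Longrightarrow> (\<lambda>g. mu'_vec c N n n1 n2 g $ l) differentiable (at g)"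
  using exhaust_3[of l]
  by (elim disjE; simp only: mu'_components; auto intro!: derivative_intros)

lemma mu'_partials:
  assumes "g \<in> Dset"
  shows "pd (\<lambda>g. mu'_vec c N n n1 n2 g $ 1) 2 g = c * (4*n1*g$2 - 3*n2*g$1 - 3*N*g$1*g$2/(rho g)^5)"
    and "pd (\<lambda>g. mu'_vec c N n n1 n2 g $ 1) 3 g = c * (2*n1*g$3)"
    and "pd (\<lambda>g. mu'_vec c N n n1 n2 g $ 2) 1 g = c * (4*n2*g$1 - 3*n1*g$2 - 3*N*g$1*g$2/(rho g)^5)"
    and "pd (\<lambda>g. mu'_vec c N n n1 n2 g $ 2) 3 g = c * (2*n2*g$3)"
    and "pd (\<lambda>g. mu'_vec c N n n1 n2 g $ 3) 1 g = - c * g$3 * (5*n1 + 3*N*((g$3)^2+1)*g$1/(rho g)^5)"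
    and "pd (\<lambda>g. mu'_vec c N n n1 n2 g $ 3) 2 g = - c * g$3 * (5*n2 + 3*N*((g$3)^2+1)*g$2/(rho g)^5)"
  unfolding mu'_components
  by (rule pd_eqI, (auto intro!: derivative_eq_intros simp: assms)[1],
      simp add: assms field_simps eval_nat_numeral)+

lemma curl_mu'_orthogonal: "g \<in> Dset \<Longrightarrow> g \<bullet> curl (mu'_vec c N n n1 n2) g = 0"
  by (simp add: curl_def inner_vec_def sum_3 mu'_partials) (simp add: field_simps)

theorem poisson_mu': "is_poisson_on (Pi_mat (\<lambda>x. mu'_vec c N n n1 n2 (gv x))) Phase"
  using open_Phase mu'_differentiable Phase_gv curl_mu'_orthogonal
  by (intro poisson_of_curl_orthogonal) auto

lemma phi_differentiable: "g \<in> Dset \<Longrightarrow> phi_fun c N n n1 n2 differentiable (at g)"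
  unfolding phi_fun_def[abs_def] by (auto intro!: derivative_intros)

lemma phi_partials:
  assumes "g \<in> Dset"
  shows "pd (phi_fun c N n n1 n2) 1 g = c * (n1 - N * g$1 / (rho g)^3) * (2*(g$1)^2 + 2*(g$2)^2 + (g$3)^2)
          + c * (n + n1 * g$1 + n2 * g$2 + N / rho g) * (4 * g$1)"
    and "pd (phi_fun c N n n1 n2) 2 g = c * (n2 - N * g$2 / (rho g)^3) * (2*(g$1)^2 + 2*(g$2)^2 + (g$3)^2)
          + c * (n + n1 * g$1 + n2 * g$2 + N / rho g) * (4 * g$2)"
    and "pd (phi_fun c N n n1 n2) 3 g = c * (n + n1 * g$1 + n2 * g$2 + N / rho g) * (2 * g$3)"
  unfolding phi_fun_def[abs_def]
  by (rule pd_eqI, (auto intro!: derivative_eq_intros simp: assms)[1],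
      simp add: assms field_simps eval_nat_numeral)+

theorem mu'_decomposition:
  assumes g: "g \<in> Dset"
  shows "mu'_vec c N n n1 n2 g = psi_fun c N n n1 n2 g *\<^sub>R g + grad_r (phi_fun c N n n1 n2) g"
proof -
  have r: "rho g \<noteq> 0" using g by simp
  have rs: "(rho g)^2 = (g$1)^2 + (g$2)^2" by (rule rho_sq)
  have "mu'_vec c N n n1 n2 g $ k = psi_fun c N n n1 n2 g * g $ k + pd (phi_fun c N n n1 n2) k g" for k
  proof -
    consider "k = 1" | "k = 2" | "k = 3" using exhaust_3 by blast
    then show ?thesis
    proof cases
      case 1
      show ?thesis unfolding 1 phi_partials(1)[OF g]
        using r rs unfolding mu'_vec_def psi_fun_def Let_def by (simp add: field_simps) algebra
    next
      case 2
      show ?thesis unfolding 2 phi_partials(2)[OF g]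
        using r rs unfolding mu'_vec_def psi_fun_def Let_def by (simp add: field_simps) algebra
    next
      case 3
      show ?thesis unfolding 3 phi_partials(3)[OF g]
        using r rs unfolding mu'_vec_def psi_fun_def Let_def by (simp add: field_simps) algebra
    qed
  qed
  then show ?thesis by (simp add: vec_eq_iff grad_r_nth)
qed

end

section \<open>A class of smooth functions on phase space\<close>

lemma inv_rho_partials:
  assumes "g \<in> Dset"
  shows "pd (\<lambda>g. 1 / rho g) 1 g = - (g$1) / (rho g)^3"
    and "pd (\<lambda>g. 1 / rho g) 2 g = - (g$2) / (rho g)^3"
    and "pd (\<lambda>g. 1 / rho g) 3 g = 0"
  by (rule pd_eqI, (auto intro!: derivative_eq_intros simp: assms)[1],
      simp add: assms field_simps eval_nat_numeral)+

lemma inv_rho_differentiable: "g \<in> Dset \<Longrightarrow> (\<lambda>g. 1 / rho g) differentiable (at g)"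
  by (auto intro!: derivative_intros)

text \<open>All functions in the theorem lie in this
  class; it is closed under partial derivatives and therefore consists of smooth functions.\<close>
inductive phase_regular :: "(real^6 \<Rightarrow> real) \<Rightarrow> bool" where
  const: "phase_regular (\<lambda>x. a)"
| coord: "phase_regular (\<lambda>x. x $ i)"
| inv_rho: "phase_regular (\<lambda>x. 1 / rho (gv x))"
| add: "phase_regular f \<Longrightarrow> phase_regular g \<Longrightarrow> phase_regular (\<lambda>x. f x + g x)"
| mult: "phase_regular f \<Longrightarrow> phase_regular g \<Longrightarrow> phase_regular (\<lambda>x. f x * g x)"
| cong: "phase_regular f \<Longrightarrow> (\<And>x. x \<in> Phase \<Longrightarrow> f x = g x) \<Longrightarrow> phase_regular g"

lemma phase_regular_inv_rho_pd: "phase_regular (pd (\<lambda>x. 1 / rho (gv x)) j)"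
proof -
  define r where "r x = 1 / rho (gv x)" for x
  have "phase_regular (\<lambda>x. (-1) * ((x$4 * axis j 1 $ 4 + x$5 * axis j 1 $ 5) * (r x * (r x * r x))))"
    unfolding r_def by (intro phase_regular.intros)
  moreover have "(-1) * ((x$4 * axis j 1 $ 4 + x$5 * axis j 1 $ 5) * (r x * (r x * r x)))
      = pd (\<lambda>x. 1 / rho (gv x)) j x" if x: "x \<in> Phase" for x
    using exhaust_6[of j] Phase_gv[OF x]
    by (elim disjE) (simp_all add: pd_gv_comp[OF inv_rho_differentiable] inv_rho_partials r_def
        field_simps eval_nat_numeral)
  ultimately show ?thesis by (rule phase_regular.cong)
qed

lemma phase_regular_derivatives:
  "phase_regular f \<Longrightarrow> (\<forall>x\<in>Phase. f differentiable (at x)) \<and> (\<forall>j. phase_regular (pd f j))"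
proof (induction rule: phase_regular.induct)
  case (const a)
  then show ?case by (simp add: phase_regular.const)
next
  case (coord i)
  then show ?case by (simp add: phase_regular.const vec_nth_differentiable)
next
  case inv_rho
  then show ?case
    by (auto intro: differentiable_gv_comp[OF inv_rho_differentiable[OF Phase_gv]]
        phase_regular_inv_rho_pd)
next
  case (add f g)
  have "phase_regular (pd (\<lambda>x. f x + g x) j)" for j
  proof (rule phase_regular.cong)
    show "phase_regular (\<lambda>x. pd f j x + pd g j x)" using add.IH by (intro phase_regular.add) auto
    show "pd f j x + pd g j x = pd (\<lambda>x. f x + g x) j x" if "x \<in> Phase" for x
      using add.IH that by (simp add: pd_add)
  qed
  then show ?case using add.IH by (auto intro: differentiable_add)
next
  case (mult f g)
  have "phase_regular (pd (\<lambda>x. f x * g x) j)" for j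
  proof (rule phase_regular.cong)
    show "phase_regular (\<lambda>x. f x * pd g j x + pd f j x * g x)"
      using mult by (intro phase_regular.add phase_regular.mult) auto
    show "f x * pd g j x + pd f j x * g x = pd (\<lambda>x. f x * g x) j x" if "x \<in> Phase" for x
      using mult.IH that by (simp add: pd_mult)
  qed
  then show ?case using mult.IH by (auto intro: differentiable_mult)
next
  case (cong f g)
  have "pd f j x = pd g j x" if "x \<in> Phase" for j x
    using frechet_derivative_cong[OF open_Phase that cong.hyps(2)] by (simp add: pd_def)
  then have "phase_regular (pd g j)" for j
    using cong.IH phase_regular.cong by blast
  moreover have "g differentiable (at x)" if "x \<in> Phase" for x
    using differentiable_cong[OF open_Phase that, of f g] cong.hyps(2) cong.IH that by blast
  ultimately show ?case by blast
qed

lemma phase_regular_differentiable: "phase_regular f \<Longrightarrow> x \<in> Phase \<Longrightarrow> f differentiable (at x)"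
  using phase_regular_derivatives by blast

lemma phase_regular_pd: "phase_regular f \<Longrightarrow> phase_regular (pd f j)"
  using phase_regular_derivatives by blast

lemma phase_regular_continuous: "phase_regular f \<Longrightarrow> continuous_on Phase f"
  using phase_regular_differentiable
  by (meson continuous_at_imp_continuous_on differentiable_imp_continuous_within)

lemma phase_regular_smooth: "phase_regular f \<Longrightarrow> smooth_on Phase f"
  unfolding smooth_on_def
proof
  fix k show "phase_regular f \<Longrightarrow> Ck_on k Phase f"
  proof (induction k arbitrary: f)
    case 0
    then show ?case by (simp add: phase_regular_continuous)
  next
    case (Suc k)
    have "Ck_on k Phase (pd f i)" for i by (rule Suc.IH[OF phase_regular_pd[OF Suc.prems]])
    moreover have "f differentiable_on Phase"
      using phase_regular_differentiable[OF Suc.prems] open_Phase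
      by (simp add: differentiable_on_eq_differentiable_at)
    ultimately show ?case by (simp add: pd_def[abs_def])
  qed
qed

lemma phase_regular_uminus [intro]:
  assumes "phase_regular f" shows "phase_regular (\<lambda>x. - f x)"
proof -
  have "phase_regular (\<lambda>x. (-1) * f x)" using assms by (intro phase_regular.mult phase_regular.const)
  then show ?thesis by (rule phase_regular.cong) simp
qed

lemma phase_regular_diff [intro]:
  assumes "phase_regular f" "phase_regular g" shows "phase_regular (\<lambda>x. f x - g x)"
proof -
  have "phase_regular (\<lambda>x. f x + - g x)" using assms by (intro phase_regular.add phase_regular_uminus)
  then show ?thesis by (rule phase_regular.cong) simp
qed

lemma phase_regular_divide_const [intro]:
  assumes "phase_regular f" shows "phase_regular (\<lambda>x. f x / a)"
proof -
  have "phase_regular (\<lambda>x. f x * (1 / a))" using assms by (intro phase_regular.mult phase_regular.const)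
  then show ?thesis by (rule phase_regular.cong) simp
qed

lemma phase_regular_power [intro]:
  assumes "phase_regular f" shows "phase_regular (\<lambda>x. f x ^ k)"
proof (induction k)
  case 0
  then show ?case by (simp add: phase_regular.const)
next
  case (Suc k)
  then have "phase_regular (\<lambda>x. f x * f x ^ k)" using assms by (intro phase_regular.mult)
  then show ?case by (rule phase_regular.cong) simp
qed

lemma phase_regular_divide_rho_power [intro]:
  assumes "phase_regular f" shows "phase_regular (\<lambda>x. f x / rho (gv x) ^ k)"
proof -
  have "phase_regular (\<lambda>x. f x * (1 / rho (gv x)) ^ k)"
    using assms by (intro phase_regular.mult phase_regular_power phase_regular.inv_rho)
  then show ?thesis by (rule phase_regular.cong) (simp add: power_one_over)
qed

lemma phase_regular_divide_rho [intro]: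
  assumes "phase_regular f" shows "phase_regular (\<lambda>x. f x / rho (gv x))"
  using phase_regular_divide_rho_power[OF assms, of 1] by simp

lemmas phase_regular_intros = phase_regular.const phase_regular.coord phase_regular.add
  phase_regular.mult phase_regular_uminus phase_regular_diff phase_regular_divide_const
  phase_regular_power phase_regular_divide_rho phase_regular_divide_rho_power

section \<open>Part (b): I2 is a Casimir function of Pi_mu'\<close>

context
  fixes c N n n1 n2 :: real
begin

lemma I2_as_phi: "I2_fun c N n n1 n2 = (\<lambda>x. ((x$1 * x$4 + x$2 * x$5) + x$3 * x$6) + phi_fun c N n n1 n2 (gv x))"
  unfolding I2_fun_def[abs_def] phi_fun_def inner_vec_def sum_3 by simp

lemma I2_regular: "phase_regular (I2_fun c N n n1 n2)"
  unfolding I2_as_phi phi_fun_def by simp (intro phase_regular_intros)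

lemma I2_grad:
  assumes x: "x \<in> Phase"
  shows "grad_r (I2_fun c N n n1 n2) x = vector [x$4, x$5, x$6,
      x$1 + pd (phi_fun c N n n1 n2) 1 (gv x), x$2 + pd (phi_fun c N n n1 n2) 2 (gv x),
      x$3 + pd (phi_fun c N n n1 n2) 3 (gv x)]"
proof -
  have dphi: "phi_fun c N n n1 n2 differentiable (at (gv x))"
    by (rule phi_differentiable[OF Phase_gv[OF x]])
  have dprod: "(\<lambda>y::real^6. y$i * y$k) differentiable (at x)" for i k
    by (intro differentiable_mult vec_nth_differentiable)
  have "pd (I2_fun c N n n1 n2) j x = axis j 1 $ 1 * x$4 + x$1 * axis j 1 $ 4
      + (axis j 1 $ 2 * x$5 + x$2 * axis j 1 $ 5) + (axis j 1 $ 3 * x$6 + x$3 * axis j 1 $ 6)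
      + pd (\<lambda>y. phi_fun c N n n1 n2 (gv y)) j x" for j
    unfolding I2_as_phi
    by (simp only: pd_add differentiable_add dprod differentiable_gv_comp[OF dphi]
        pd_mult vec_nth_differentiable pd_coord)
  then show ?thesis
    by (simp add: vec_eq_iff forall_6 grad_r_nth pd_gv_comp[OF dphi])
qed

theorem I2_casimir: "casimir_on (Pi_mat (\<lambda>x. mu'_vec c N n n1 n2 (gv x))) Phase (I2_fun c N n n1 n2)"
  unfolding casimir_on_def
proof (intro conjI ballI)
  show "smooth_on Phase (I2_fun c N n n1 n2)" by (rule phase_regular_smooth[OF I2_regular])
  fix x assume x: "x \<in> Phase"
  define ps where "ps = psi_fun c N n n1 n2 (gv x)"
  define p where "p k = pd (phi_fun c N n n1 n2) k (gv x)" for k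
  have "mu'_vec c N n n1 n2 (gv x) $ k = ps * gv x $ k + p k" for k
    using arg_cong[OF mu'_decomposition[OF Phase_gv[OF x]], of "\<lambda>v. v $ k"]
    by (simp add: ps_def p_def grad_r_nth)
  then have "mu'_vec c N n n1 n2 (gv x) $ 1 = ps * x$4 + p 1" "mu'_vec c N n n1 n2 (gv x) $ 2 = ps * x$5 + p 2"
    "mu'_vec c N n n1 n2 (gv x) $ 3 = ps * x$6 + p 3"
    by simp_all
  then show "Pi_mat (\<lambda>x. mu'_vec c N n n1 n2 (gv x)) x *v grad_r (I2_fun c N n n1 n2) x = 0"
    unfolding I2_grad[OF x] p_def[symmetric]
    by (simp add: vec_eq_iff forall_6 matrix_vector_mult_def sum_6 Pi_mat_def Let_def algebra_simps)
qed

end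

section \<open>Existence of solutions by Picard iteration\<close>

text \<open>Time is clipped to the interval [0,h] so that the Picard operator acts on bounded
  continuous functions on the whole real line.\<close>
definition clip :: "real \<Rightarrow> real \<Rightarrow> real" where
  "clip h t = max 0 (min h t)"

lemma clip_mem: "0 < h \<Longrightarrow> clip h t \<in> {0..h}"
  unfolding clip_def by auto

lemma clip_id: "t \<in> {0..h} \<Longrightarrow> clip h t = t"
  unfolding clip_def by auto

lemma continuous_on_clip: "continuous_on UNIV (clip h)"
  unfolding clip_def[abs_def] by (intro continuous_intros)

context
  fixes f :: "'a::euclidean_space \<Rightarrow> 'a" and L B h :: real
  assumes cont: "continuous_on UNIV f"
    and lip: "\<And>y z. norm (f y - f z) \<le> L * norm (y - z)"
    and bnd: "\<And>y. norm (f y) \<le> B" and h: "0 < h" and hL: "h * L < 1" and L: "0 \<le> L"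
begin

lemma continuous_on_field_along: "continuous_on S (\<lambda>s. f (apply_bcontfun \<phi> s))"
  by (rule continuous_on_compose2[OF cont continuous_on_apply_bcontfun]) auto

lemma picard_integral_bound:
  "norm (integral {0..clip h t} (\<lambda>s. f (apply_bcontfun \<phi> s))) \<le> h * B"
proof -
  have "B \<ge> 0" using bnd[of 0] norm_ge_zero[of "f 0"] by linarith
  have "norm (integral {0..clip h t} (\<lambda>s. f (apply_bcontfun \<phi> s))) \<le> B * (clip h t - 0)"
    by (rule integral_bound) (use clip_mem[OF h] continuous_on_field_along bnd in auto)
  also have "\<dots> \<le> B * h" using clip_mem[OF h, of t] \<open>B \<ge> 0\<close> by (auto intro: mult_left_mono)
  finally show ?thesis by (simp add: mult.commute)
qed

lemma picard_image_bcontfun: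
  "(\<lambda>t. x0 + integral {0..clip h t} (\<lambda>s. f (apply_bcontfun \<phi> s))) \<in> bcontfun"
proof (rule bcontfun_normI)
  have "continuous_on {0..h} (\<lambda>u. integral {0..u} (\<lambda>s. f (apply_bcontfun \<phi> s)))"
    by (intro indefinite_integral_continuous_1 integrable_continuous_interval continuous_on_field_along)
  then have "continuous_on UNIV (\<lambda>t. integral {0..clip h t} (\<lambda>s. f (apply_bcontfun \<phi> s)))"
    by (rule continuous_on_compose2[OF _ continuous_on_clip]) (use clip_mem[OF h] in auto)
  then show "continuous_on UNIV (\<lambda>t. x0 + integral {0..clip h t} (\<lambda>s. f (apply_bcontfun \<phi> s)))"
    by (intro continuous_intros)
  show "norm (x0 + integral {0..clip h t} (\<lambda>s. f (apply_bcontfun \<phi> s))) \<le> norm x0 + h * B" for t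
    using picard_integral_bound[of t \<phi>] norm_triangle_ineq[of x0] by (meson add_left_mono order_trans)
qed

text \<open>Since h L < 1 the Picard operator is a contraction; Banach's fixed point theorem
  yields a solution of the integral equation.\<close>
lemma picard_fixed_point:
  "\<exists>\<phi>. \<forall>t. apply_bcontfun \<phi> t = x0 + integral {0..clip h t} (\<lambda>s. f (apply_bcontfun \<phi> s))"
proof -
  define T where "T \<phi> = Bcontfun (\<lambda>t. x0 + integral {0..clip h t} (\<lambda>s. f (apply_bcontfun \<phi> s)))"
    for \<phi> :: "real \<Rightarrow>\<^sub>C 'a"
  have T_apply: "apply_bcontfun (T \<phi>) t = x0 + integral {0..clip h t} (\<lambda>s. f (apply_bcontfun \<phi> s))"
    for \<phi> t
    unfolding T_def by (simp add: Bcontfun_inverse[OF picard_image_bcontfun])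
  have contraction: "dist (T \<phi>) (T \<psi>) \<le> (h * L) * dist \<phi> \<psi>" for \<phi> \<psi>
  proof (rule dist_bound)
    fix t
    have "integral {0..clip h t} (\<lambda>s. f (apply_bcontfun \<phi> s)) - integral {0..clip h t} (\<lambda>s. f (apply_bcontfun \<psi> s))
        = integral {0..clip h t} (\<lambda>s. f (apply_bcontfun \<phi> s) - f (apply_bcontfun \<psi> s))"
      by (intro integral_diff[symmetric] integrable_continuous_interval continuous_on_field_along)
    then have "dist (T \<phi> t) (T \<psi> t) = norm (integral {0..clip h t} (\<lambda>s. f (apply_bcontfun \<phi> s) - f (apply_bcontfun \<psi> s)))"
      unfolding T_apply dist_norm by simp
    also have "\<dots> \<le> (L * dist \<phi> \<psi>) * (clip h t - 0)"
    proof (rule integral_bound)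
      show "0 \<le> clip h t" using clip_mem[OF h] by auto
      show "continuous_on {0..clip h t} (\<lambda>s. f (apply_bcontfun \<phi> s) - f (apply_bcontfun \<psi> s))"
        by (intro continuous_intros continuous_on_field_along)
      show "norm (f (apply_bcontfun \<phi> s) - f (apply_bcontfun \<psi> s)) \<le> L * dist \<phi> \<psi>" for s
        using lip[of "apply_bcontfun \<phi> s" "apply_bcontfun \<psi> s"] dist_bounded[of \<phi> s \<psi>] L
        by (simp add: dist_norm) (meson mult_left_mono order_trans)
    qed
    also have "\<dots> \<le> (L * dist \<phi> \<psi>) * h"
      using clip_mem[OF h, of t] L by (auto intro!: mult_left_mono)
    finally show "dist (T \<phi> t) (T \<psi> t) \<le> (h * L) * dist \<phi> \<psi>" by (simp add: ac_simps)
  qed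
  obtain \<phi> where "T \<phi> = \<phi>"
    using banach_fix_type[of "h * L" T] contraction h L hL by (auto simp: zero_le_mult_iff)
  then show ?thesis using T_apply by metis
qed

lemma picard_solution:
  "\<exists>y. (\<forall>t\<in>{0<..<h}. (y has_vector_derivative f (y t)) (at t)) \<and> (\<forall>t. norm (y t - x0) \<le> h * B)"
proof -
  obtain \<phi> where \<phi>: "\<And>t. apply_bcontfun \<phi> t = x0 + integral {0..clip h t} (\<lambda>s. f (apply_bcontfun \<phi> s))"
    using picard_fixed_point by blast
  define g where "g s = f (apply_bcontfun \<phi> s)" for s
  have "(apply_bcontfun \<phi> has_vector_derivative g t) (at t)" if t: "t \<in> {0<..<h}" for t
  proof -
    have "((\<lambda>u. x0 + integral {0..u} g) has_vector_derivative (0 + g t)) (at t within {0..h})"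
      by (intro derivative_intros integral_has_vector_derivative)
        (use t continuous_on_field_along in \<open>auto simp: g_def\<close>)
    then have d: "((\<lambda>u. x0 + integral {0..u} g) has_vector_derivative g t) (at t)"
      using at_within_interior[of t "{0..h}"] t by simp
    show ?thesis
    proof (rule has_vector_derivative_transform_within_open[OF d, of "{0<..<h}"])
      show "x0 + integral {0..u} g = apply_bcontfun \<phi> u" if "u \<in> {0<..<h}" for u
        using that by (subst \<phi>) (simp add: clip_id g_def[abs_def])
    qed (use t in simp_all)
  qed
  moreover have "norm (apply_bcontfun \<phi> t - x0) \<le> h * B" for t
    using picard_integral_bound[of t \<phi>] by (subst \<phi>) simp
  ultimately show ?thesis unfolding g_def by blast
qed

end

definition lie_deriv :: "(real^'n \<Rightarrow> real^'n) \<Rightarrow> (real^'n \<Rightarrow> real) \<Rightarrow> real^'n \<Rightarrow> real" where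
  "lie_deriv F I x = frechet_derivative I (at x) (F x)"

lemma lie_deriv_along_solution:
  assumes y: "(y has_vector_derivative F (y t)) (at t)" and I: "I differentiable (at (y t))"
  shows "((\<lambda>s. I (y s)) has_real_derivative lie_deriv F I (y t)) (at t)"
proof -
  let ?D = "frechet_derivative I (at (y t))"
  have hI: "(I has_derivative ?D) (at (y t))" using I frechet_derivative_works by blast
  have lin: "linear ?D" using hI has_derivative_linear by blast
  have hy: "(y has_derivative (\<lambda>s. s *\<^sub>R F (y t))) (at t)"
    using y unfolding has_vector_derivative_def .
  have "((\<lambda>s. I (y s)) has_derivative (\<lambda>s. ?D (s *\<^sub>R F (y t)))) (at t)"
    using has_derivative_compose[OF hy hI] by (simp add: o_def)
  moreover have "(\<lambda>s. ?D (s *\<^sub>R F (y t))) = (*) (lie_deriv F I (y t))"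
    unfolding lie_deriv_def using lin by (auto simp: linear_scale mult.commute)
  ultimately show ?thesis unfolding has_field_derivative_def by simp
qed

text \<open>A field that is Lipschitz on a closed cube around x0 has a solution through x0
  staying in the cube for a short time: apply Picard's theorem to the field composed with
  the projection onto the cube.\<close>
lemma local_solution_in_cube:
  fixes F :: "real^'n \<Rightarrow> real^'n" and x0 :: "real^'n" and d :: real
  defines "K \<equiv> cbox (x0 - (\<chi> i. d)) (x0 + (\<chi> i. d))"
  assumes d: "d > 0" and cont: "continuous_on K F"
    and L: "L \<ge> 0" "\<And>y z. y \<in> K \<Longrightarrow> z \<in> K \<Longrightarrow> norm (F y - F z) \<le> L * norm (y - z)"
  shows "\<exists>h>0. \<exists>y. (\<forall>t\<in>{0<..<h}. (y has_vector_derivative F (y t)) (at t)) \<and> (\<forall>t. y t \<in> K)"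
proof -
  define a where "a = x0 - (\<chi> i. d)"
  define b where "b = x0 + (\<chi> i. d)"
  have memK: "x \<in> K \<longleftrightarrow> (\<forall>i. \<bar>x $ i - x0 $ i\<bar> \<le> d)" for x
    unfolding K_def mem_box_cart by (auto simp: abs_le_iff algebra_simps)
  have "x0 \<in> K" using memK d by simp
  then have "\<forall>i\<in>Basis. a \<bullet> i \<le> b \<bullet> i"
    unfolding K_def a_def b_def by (metis box_ne_empty(1) empty_iff)
  then have clamp_K: "clamp a b z \<in> K" for z unfolding K_def a_def b_def by (simp add: clamp_in_interval)
  obtain B0 where B0: "\<And>x. x \<in> K \<Longrightarrow> norm (F x) \<le> B0"
    using compact_imp_bounded[OF compact_continuous_image[OF cont]] bounded_iff unfolding K_def
    by (metis compact_cbox imageI)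
  define B where "B = max B0 0"
  have B: "B \<ge> 0" "\<And>x. x \<in> K \<Longrightarrow> norm (F x) \<le> B" unfolding B_def using B0 by force+
  define Fh where "Fh z = F (clamp a b z)" for z
  have Fh_cont: "continuous_on UNIV Fh"
    using continuous_on_ext_cont[of a b F UNIV] cont
    unfolding Fh_def K_def a_def b_def ext_cont_def by simp
  have Fh_lip: "norm (Fh y - Fh z) \<le> L * norm (y - z)" for y z
    using L(2)[OF clamp_K clamp_K] dist_clamps_le_dist_args[of a b y z] L(1)
    unfolding Fh_def dist_norm by (meson mult_left_mono order_trans)
  define h where "h = min (1 / (2 * (L + 1))) (d / (B + 1))"
  have h: "h > 0" unfolding h_def using L(1) B(1) d by simp
  have "h * L \<le> (1 / (2 * (L + 1))) * L" unfolding h_def using L(1) by (intro mult_right_mono) auto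
  also have "\<dots> < 1" using L(1) by (simp add: field_simps)
  finally have hL: "h * L < 1" .
  have "h * B \<le> (d / (B + 1)) * B" unfolding h_def using B(1) by (intro mult_right_mono) auto
  also have "\<dots> \<le> d" using B(1) d by (simp add: field_simps)
  finally have hB: "h * B \<le> d" .
  obtain y where yd: "\<And>t. t \<in> {0<..<h} \<Longrightarrow> (y has_vector_derivative Fh (y t)) (at t)"
    and yb: "\<And>t. norm (y t - x0) \<le> h * B"
    using picard_solution[OF Fh_cont Fh_lip _ h hL L(1), of B x0] B(2)[OF clamp_K]
    unfolding Fh_def by blast
  have yK: "y t \<in> K" for t
  proof -
    have "\<bar>y t $ i - x0 $ i\<bar> \<le> d" for i
      using component_le_norm_cart[of "y t - x0" i] yb[of t] hB by simp
    then show ?thesis using memK by blast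
  qed
  moreover have "Fh (y t) = F (y t)" for t
    using yK[of t] unfolding Fh_def K_def a_def b_def by simp
  ultimately show ?thesis using h yd by metis
qed

text \<open>A function whose Lie derivative along a locally Lipschitz field is nonzero at some
  point of the domain is not a constant of motion: along the solution through a nearby point
  its derivative stays nonzero.\<close>
theorem not_const_of_motion:
  fixes F :: "real^6 \<Rightarrow> real^6"
  assumes S: "open S" "x0 \<in> S" and dI: "\<And>x. x \<in> S \<Longrightarrow> I differentiable (at x)"
    and cont: "continuous (at x0) (lie_deriv F I)" and nonzero: "lie_deriv F I x0 \<noteq> 0"
    and Fc: "continuous_on S F"
    and lip: "\<And>K. compact K \<Longrightarrow> convex K \<Longrightarrow> K \<subseteq> S \<Longrightarrow>
               \<exists>L\<ge>0. \<forall>y\<in>K. \<forall>z\<in>K. norm (F y - F z) \<le> L * norm (y - z)"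
  shows "\<not> const_of_motion F S I"
proof
  assume com: "const_of_motion F S I"
  obtain e1 where e1: "e1 > 0" "\<And>x. dist x x0 < e1 \<Longrightarrow> lie_deriv F I x \<noteq> 0"
    using cont nonzero unfolding continuous_at_eps_delta
    by (metis dist_real_def abs_minus_commute less_irrefl zero_less_abs_iff diff_0_right)
  obtain e2 where e2: "e2 > 0" "ball x0 e2 \<subseteq> S" using S open_contains_ball by blast
  define r where "r = min e1 e2"
  define d where "d = r / 7"
  define K where "K = cbox (x0 - (\<chi> i. d)) (x0 + (\<chi> i. d))"
  have r: "r > 0" unfolding r_def using e1 e2 by simp
  then have d: "d > 0" unfolding d_def by simp
  have near: "dist x x0 < e1 \<and> dist x x0 < e2" if "x \<in> K" for x
  proof -
    have "norm (x - x0) \<le> (\<Sum>i\<in>UNIV. \<bar>(x - x0) $ i\<bar>)" by (rule norm_le_l1_cart)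
    also have "\<dots> \<le> (\<Sum>i\<in>(UNIV::6 set). d)"
      using that unfolding K_def mem_box_cart by (intro sum_mono) (auto simp: abs_le_iff algebra_simps)
    also have "\<dots> < r" using r unfolding d_def by simp
    finally show ?thesis unfolding r_def by (simp add: dist_norm)
  qed
  have KS: "K \<subseteq> S" using near e2(2) by (auto simp: dist_commute)
  have nonzero_K: "\<And>x. x \<in> K \<Longrightarrow> lie_deriv F I x \<noteq> 0" using near e1(2) by blast
  obtain L where L: "L \<ge> 0" "\<And>y z. y \<in> K \<Longrightarrow> z \<in> K \<Longrightarrow> norm (F y - F z) \<le> L * norm (y - z)"
    using lip[OF _ _ KS] unfolding K_def by (metis compact_cbox convex_box(1))
  obtain h y where h: "h > 0" and yd: "\<And>t. t \<in> {0<..<h} \<Longrightarrow> (y has_vector_derivative F (y t)) (at t)"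
    and yK: "\<And>t. y t \<in> K"
    using local_solution_in_cube[OF d continuous_on_subset[OF Fc KS[unfolded K_def]] L[unfolded K_def]]
    unfolding K_def by blast
  have "is_solution F S y {0<..<h}"
    unfolding is_solution_def using yd yK KS by (auto simp: is_interval_1)
  then have same: "I (y (h/3)) = I (y (2*h/3))"
    using com h unfolding const_of_motion_def by auto
  have "\<exists>z. h/3 < z \<and> z < 2*h/3 \<and> I (y (2*h/3)) - I (y (h/3)) = (2*h/3 - h/3) * lie_deriv F I (y z)"
  proof (rule MVT2)
    show "((\<lambda>s. I (y s)) has_real_derivative lie_deriv F I (y t)) (at t)" if "h/3 \<le> t" "t \<le> 2*h/3" for t
      using that h yK KS by (intro lie_deriv_along_solution yd dI) auto
  qed (use h in simp)
  then show False using same h nonzero_K[OF yK] by auto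
qed

section \<open>Part (a): I2 is not a constant of motion for mu\<close>

text \<open>Functions of the class are locally Lipschitz: their partials are continuous, hence
  bounded on compact sets, which bounds the derivative on convex sets.\<close>
lemma phase_regular_lipschitz:
  assumes f: "phase_regular f" and K: "compact K" "convex K" "K \<subseteq> Phase"
  shows "\<exists>L\<ge>0. \<forall>y\<in>K. \<forall>z\<in>K. \<bar>f y - f z\<bar> \<le> L * norm (y - z)"
proof -
  have "\<exists>B. \<forall>x\<in>K. \<bar>pd f j x\<bar> \<le> B" for j
  proof -
    have "continuous_on K (pd f j)"
      using phase_regular_continuous[OF phase_regular_pd[OF f]] K(3) continuous_on_subset by blast
    then have "compact (pd f j ` K)" using K(1) compact_continuous_image by blast
    then obtain B where "\<forall>y\<in>pd f j ` K. norm y \<le> B" using compact_imp_bounded bounded_iff by metis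
    then show ?thesis by auto
  qed
  then obtain B where B: "\<And>j x. x \<in> K \<Longrightarrow> \<bar>pd f j x\<bar> \<le> B j" by metis
  define L where "L = (\<Sum>j\<in>UNIV. \<bar>B j\<bar>)"
  have dif: "f differentiable (at x)" if "x \<in> K" for x
    using phase_regular_differentiable[OF f] K(3) that by blast
  have onorm: "onorm (frechet_derivative f (at x)) \<le> L" if x: "x \<in> K" for x
  proof (rule onorm_le)
    fix v :: "real^6"
    have "norm (frechet_derivative f (at x) v) = \<bar>\<Sum>j\<in>UNIV. v $ j * pd f j x\<bar>"
      using frechet_derivative_expand[OF dif[OF x]] by simp
    also have "\<dots> \<le> (\<Sum>j\<in>UNIV. \<bar>v $ j * pd f j x\<bar>)" by (rule sum_abs)
    also have "\<dots> \<le> (\<Sum>j\<in>UNIV. norm v * \<bar>B j\<bar>)"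
    proof (rule sum_mono)
      fix j
      have "\<bar>v $ j\<bar> \<le> norm v" by (rule component_le_norm_cart)
      moreover have "\<bar>pd f j x\<bar> \<le> \<bar>B j\<bar>" using B[OF x, of j] by linarith
      ultimately show "\<bar>v $ j * pd f j x\<bar> \<le> norm v * \<bar>B j\<bar>"
        by (simp add: abs_mult mult_mono')
    qed
    also have "\<dots> = L * norm v" unfolding L_def by (simp add: sum_distrib_left mult.commute)
    finally show "norm (frechet_derivative f (at x) v) \<le> L * norm v" .
  qed
  have "norm (f y - f z) \<le> L * norm (y - z)" if "y \<in> K" "z \<in> K" for y z
    using dif frechet_derivative_works has_derivative_at_withinI
    by (intro differentiable_bound[OF K(2) _ onorm that]) blast+
  moreover have "L \<ge> 0" unfolding L_def by (simp add: sum_nonneg)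
  ultimately show ?thesis by auto
qed

context
  fixes c N n n1 n2 a1 a2 \<epsilon> :: real
begin

abbreviation F_mu :: "real^6 \<Rightarrow> real^6" where
  "F_mu \<equiv> field c (mu_vec c N n n1 n2) (U_pot c N n n1 n2 a1 a2 \<epsilon>)"

lemma mu_regular: "phase_regular (\<lambda>x. mu_vec c N n n1 n2 (gv x) $ l)"
  using exhaust_3[of l]
  by (elim disjE) (simp_all add: mu_vec_def Let_def, (intro phase_regular_intros)+)

lemma U_regular: "phase_regular (\<lambda>x. U_pot c N n n1 n2 a1 a2 \<epsilon> (gv x))"
  unfolding U_pot_def by simp (intro phase_regular_intros)+

lemma grad_U_regular: "phase_regular (\<lambda>x. grad_r (U_pot c N n n1 n2 a1 a2 \<epsilon>) (gv x) $ k)"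
proof -
  have dU: "U_pot c N n n1 n2 a1 a2 \<epsilon> differentiable (at (gv x))" if "x \<in> Phase" for x
    using Phase_gv[OF that] unfolding U_pot_def[abs_def] by (auto intro!: derivative_intros)
  have pd_U: "phase_regular (pd (\<lambda>x. U_pot c N n n1 n2 a1 a2 \<epsilon> (gv x)) j)" for j
    by (rule phase_regular_pd[OF U_regular])
  consider "k = 1" | "k = 2" | "k = 3" using exhaust_3 by blast
  then show ?thesis
  proof cases
    case 1
    show ?thesis unfolding 1
      by (rule phase_regular.cong[OF pd_U[of 4]]) (simp add: grad_r_nth pd_gv_comp[OF dU])
  next
    case 2
    show ?thesis unfolding 2
      by (rule phase_regular.cong[OF pd_U[of 5]]) (simp add: grad_r_nth pd_gv_comp[OF dU])
  next
    case 3
    show ?thesis unfolding 3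
      by (rule phase_regular.cong[OF pd_U[of 6]]) (simp add: grad_r_nth pd_gv_comp[OF dU])
  qed
qed

lemma field_regular: "phase_regular (\<lambda>x. F_mu x $ k)"
  using exhaust_6[of k]
  by (elim disjE) (simp_all add: field_def pack6_def cross3_def Iinv_def,
      (intro phase_regular_intros mu_regular grad_U_regular)+)

lemma field_continuous: "continuous_on Phase F_mu"
proof -
  have "continuous_on Phase (\<lambda>x. \<chi> k. F_mu x $ k)"
    by (intro continuous_on_vec_lambda phase_regular_continuous[OF field_regular])
  then show ?thesis by simp
qed

lemma field_lipschitz:
  assumes K: "compact K" "convex K" "K \<subseteq> Phase"
  shows "\<exists>L\<ge>0. \<forall>y\<in>K. \<forall>z\<in>K. norm (F_mu y - F_mu z) \<le> L * norm (y - z)"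
proof -
  obtain L where L: "\<And>k. L k \<ge> 0"
    "\<And>k y z. y \<in> K \<Longrightarrow> z \<in> K \<Longrightarrow> \<bar>F_mu y $ k - F_mu z $ k\<bar> \<le> L k * norm (y - z)"
    using phase_regular_lipschitz[OF field_regular K] by metis
  have "norm (F_mu y - F_mu z) \<le> (\<Sum>k\<in>UNIV. L k) * norm (y - z)" if "y \<in> K" "z \<in> K" for y z
  proof -
    have "norm (F_mu y - F_mu z) \<le> (\<Sum>k\<in>UNIV. \<bar>(F_mu y - F_mu z) $ k\<bar>)" by (rule norm_le_l1_cart)
    also have "\<dots> \<le> (\<Sum>k\<in>UNIV. L k * norm (y - z))"
      using L(2)[OF that] by (intro sum_mono) simp
    finally show ?thesis by (simp add: sum_distrib_right)
  qed
  moreover have "(\<Sum>k\<in>UNIV. L k) \<ge> 0" using L(1) by (simp add: sum_nonneg)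
  ultimately show ?thesis by blast
qed

lemma lie_deriv_I2_expand:
  "x \<in> Phase \<Longrightarrow> lie_deriv F_mu (I2_fun c N n n1 n2) x
     = (\<Sum>j\<in>UNIV. F_mu x $ j * pd (I2_fun c N n n1 n2) j x)"
  unfolding lie_deriv_def by (rule frechet_derivative_expand[OF phase_regular_differentiable[OF I2_regular]])

lemma lie_deriv_I2_continuous: "continuous_on Phase (lie_deriv F_mu (I2_fun c N n n1 n2))"
proof -
  have "phase_regular (\<lambda>x. \<Sum>j\<in>UNIV. F_mu x $ j * pd (I2_fun c N n n1 n2) j x)"
    unfolding sum_6 by (intro phase_regular.add phase_regular.mult field_regular phase_regular_pd I2_regular)
  then have "phase_regular (lie_deriv F_mu (I2_fun c N n n1 n2))"
    by (rule phase_regular.cong) (simp add: lie_deriv_I2_expand)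
  then show ?thesis by (rule phase_regular_continuous)
qed

definition x0 :: "real^6" where "x0 = vector [1, 0, 0, 0, 1, 1]"

lemma x0_nth [simp]: "x0 $ 1 = 1" "x0 $ 2 = 0" "x0 $ 3 = 0" "x0 $ 4 = 0" "x0 $ 5 = 1" "x0 $ 6 = 1"
  unfolding x0_def by simp_all

lemma x0_Phase: "x0 \<in> Phase"
  unfolding Phase_def Dset_def by simp

lemma lie_deriv_I2_x0: "c \<noteq> 0 \<Longrightarrow> lie_deriv F_mu (I2_fun c N n n1 n2) x0 = - 3 * N / 2"
proof -
  assume c: "c \<noteq> 0"
  have g: "gv x0 \<in> Dset" using x0_Phase Phase_gv by blast
  have gx0: "gv x0 = vector [0, 1, 1]" unfolding gv_def by simp
  have rho: "rho (vector [0, 1, 1]) = 1" unfolding rho_def by simp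
  have "pd (I2_fun c N n n1 n2) j x0 = grad_r (I2_fun c N n n1 n2) x0 $ j" for j
    by (simp add: grad_r_nth)
  then show ?thesis
    unfolding lie_deriv_I2_expand[OF x0_Phase] sum_6 I2_grad[OF x0_Phase] phi_partials[OF g]
    using c by (simp add: field_def pack6_def cross3_def Iinv_def mu_vec_def Let_def rho gx0 field_simps)
qed

theorem I2_not_const_of_motion:
  assumes "c \<noteq> 0" "N \<noteq> 0"
  shows "\<not> const_of_motion F_mu Phase (I2_fun c N n n1 n2)"
proof (rule not_const_of_motion[OF open_Phase x0_Phase])
  show "I2_fun c N n n1 n2 differentiable (at x)" if "x \<in> Phase" for x
    using phase_regular_differentiable[OF I2_regular that] .
  show "continuous (at x0) (lie_deriv F_mu (I2_fun c N n n1 n2))"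
    using lie_deriv_I2_continuous open_Phase x0_Phase continuous_on_eq_continuous_at by blast
  show "lie_deriv F_mu (I2_fun c N n n1 n2) x0 \<noteq> 0" using lie_deriv_I2_x0 assms by simp
qed (use field_continuous field_lipschitz in auto)

end

theorem mainTheorem10:
  fixes c N n n1 n2 a1 a2 \<epsilon> :: real
  assumes "c > 0"
  shows "(N \<noteq> 0 \<longrightarrow>
            \<not> const_of_motion (field c (mu_vec c N n n1 n2) (U_pot c N n n1 n2 a1 a2 \<epsilon>))
                Phase (I2_fun c N n n1 n2))
       \<and> (\<forall>g\<in>Dset. mu'_vec c N n n1 n2 g
                    = psi_fun c N n n1 n2 g *\<^sub>R g + grad_r (phi_fun c N n n1 n2) g)
       \<and> is_poisson_on (Pi_mat (\<lambda>x. mu'_vec c N n n1 n2 (gv x))) Phase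
       \<and> casimir_on (Pi_mat (\<lambda>x. mu'_vec c N n n1 n2 (gv x))) Phase (I2_fun c N n n1 n2)"
  using I2_not_const_of_motion[of c N] assms mu'_decomposition poisson_mu' I2_casimir by auto

end
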